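(* Let $X$ be a quasigeodesic metric space. (a) If $X$ is not coarsely equivalent to a metric space with bounded geometry, then $h_\infty(X)=\infty$. (b) Otherwise, there exists a connected graph $G$ with uniformly bounded vertex degrees which is quasi-isometric to $X$, and: (i) if $\lim_{l\to\infty}\frac1l\log\big(\sup_{v\in G}|B_G(v,l)|\big)=0$, then $h_\infty(X)=0$; (ii) if $\limsup_{l\to\infty}\frac1l\log\big(\sup_{v\in G}|B_G(v,l)|\big)>0$, then $h_\infty(X)=\infty$.
   Context: $G$ carries its path metric and $B_G(v,l)$ is the closed ball. $X$ is quasigeodesic if there are $C\ge1,A\ge0$ such that any $x,x'$ are joined by a map $p\colon[0,d(x,x')]\to X$, $p(0)=x$, $p(d(x,x'))=x'$, with $C^{-1}|s-t|-A\le d(p(s),p(t))\le C|s-t|+A$. A $(C,A)$-quasi-isometry $f\colon X\to Y$ satisfies $C^{-1}d(x,x')-A\le d(f(x),f(x'))\le Cd(x,x')+A$ and every point of $Y$ is within $A$ of $f(X)$. Bounded geometry: for every $r>0$ closed balls of radius $r$ have uniformly bounded cardinality. Coarse equivalence: a map $f$ with nondecreasing $\rho_\pm$, $\rho_-(r)\to\infty$, $\rho_-(d(x,x'))\le d(f(x),f(x'))\le\rho_+(d(x,x'))$, and coarsely dense image. Coarse entropy $h_\infty(X)=\lim_{\delta\to\infty}\lim_{R\to\infty}\limsup_{n\to\infty}\frac1n\log s(n,R,\delta,x_0)$, where $s(n,R,\delta,x_0)$ is the supremum of cardinalities of $R$-separated sets of $\delta$-paths $(x_0,\dots,x_n)$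 ($d(x_i,x_{i+1})\le\delta$) starting at $x_0$, paths compared by $\max_i d(x_i,y_i)$. *)

theory Defs
  imports "HOL-Analysis.Analysis"
begin

definition quasigeodesic :: "'a set \<Rightarrow> ('a \<Rightarrow> 'a \<Rightarrow> real) \<Rightarrow> bool" where
  "quasigeodesic S d \<longleftrightarrow> (\<exists>C A. C \<ge> 1 \<and> A \<ge> 0 \<and>
     (\<forall>x\<in>S. \<forall>x'\<in>S. \<exists>p :: real \<Rightarrow> 'a.
        p 0 = x \<and> p (d x x') = x' \<and> p ` {0..d x x'} \<subseteq> S \<and>
        (\<forall>s\<in>{0..d x x'}. \<forall>t\<in>{0..d x x'}.
            \<bar>s - t\<bar> / C - A \<le> d (p s) (p t) \<and> d (p s) (p t) \<le> C * \<bar>s - t\<bar> + A)))"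

definition quasi_isometry :: "'a set \<Rightarrow> ('a \<Rightarrow> 'a \<Rightarrow> real) \<Rightarrow> 'b set \<Rightarrow> ('b \<Rightarrow> 'b \<Rightarrow> real)
    \<Rightarrow> real \<Rightarrow> real \<Rightarrow> ('a \<Rightarrow> 'b) \<Rightarrow> bool" where
  "quasi_isometry S d T e C A f \<longleftrightarrow> f ` S \<subseteq> T \<and>
     (\<forall>x\<in>S. \<forall>x'\<in>S. d x x' / C - A \<le> e (f x) (f x') \<and> e (f x) (f x') \<le> C * d x x' + A) \<and>
     (\<forall>y\<in>T. \<exists>x\<in>S. e y (f x) \<le> A)"

definition quasi_isometric :: "'a set \<Rightarrow> ('a \<Rightarrow> 'a \<Rightarrow> real) \<Rightarrow> 'b set \<Rightarrow> ('b \<Rightarrow> 'b \<Rightarrow> real) \<Rightarrow> bool" where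
  "quasi_isometric S d T e \<longleftrightarrow> (\<exists>C A f. C \<ge> 1 \<and> A \<ge> 0 \<and> quasi_isometry S d T e C A f)"

definition bounded_geometry :: "'a set \<Rightarrow> ('a \<Rightarrow> 'a \<Rightarrow> real) \<Rightarrow> bool" where
  "bounded_geometry S d \<longleftrightarrow> (\<forall>r>0. \<exists>N::nat. \<forall>x\<in>S.
      finite {y\<in>S. d x y \<le> r} \<and> card {y\<in>S. d x y \<le> r} \<le> N)"

definition coarse_equivalence :: "'a set \<Rightarrow> ('a \<Rightarrow> 'a \<Rightarrow> real) \<Rightarrow> 'b set \<Rightarrow> ('b \<Rightarrow> 'b \<Rightarrow> real)
    \<Rightarrow> ('a \<Rightarrow> 'b) \<Rightarrow> bool" where
  "coarse_equivalence S d T e f \<longleftrightarrow> f ` S \<subseteq> T \<and>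
     (\<exists>\<rho>m \<rho>p :: real \<Rightarrow> real. mono \<rho>m \<and> mono \<rho>p \<and> filterlim \<rho>m at_top at_top \<and>
        (\<forall>x\<in>S. \<forall>x'\<in>S. \<rho>m (d x x') \<le> e (f x) (f x') \<and> e (f x) (f x') \<le> \<rho>p (d x x'))) \<and>
     (\<exists>R. \<forall>y\<in>T. \<exists>x\<in>S. e y (f x) \<le> R)"

text \<open>Every metric space with bounded geometry is countable (it is the union of the
  finite balls of radius n around a point), so it suffices to let the target range over
  metric spaces whose carrier is a subset of nat.\<close>
definition coarsely_bounded_geometry :: "'a set \<Rightarrow> ('a \<Rightarrow> 'a \<Rightarrow> real) \<Rightarrow> bool" where
  "coarsely_bounded_geometry S d \<longleftrightarrow> (\<exists>(T::nat set) e f.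
      Metric_space T e \<and> bounded_geometry T e \<and> coarse_equivalence S d T e f)"

definition simple_graph :: "nat set \<Rightarrow> (nat \<Rightarrow> nat \<Rightarrow> bool) \<Rightarrow> bool" where
  "simple_graph V E \<longleftrightarrow> (\<forall>u v. E u v \<longrightarrow> u \<in> V \<and> v \<in> V \<and> E v u \<and> u \<noteq> v)"

definition gwalk :: "nat set \<Rightarrow> (nat \<Rightarrow> nat \<Rightarrow> bool) \<Rightarrow> nat \<Rightarrow> nat \<Rightarrow> nat \<Rightarrow> bool" where
  "gwalk V E u v n \<longleftrightarrow> (\<exists>p :: nat \<Rightarrow> nat. p 0 = u \<and> p n = v \<and>
      (\<forall>i\<le>n. p i \<in> V) \<and> (\<forall>i<n. E (p i) (p (Suc i))))"

definition graph_connected :: "nat set \<Rightarrow> (nat \<Rightarrow> nat \<Rightarrow> bool) \<Rightarrow> bool" where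
  "graph_connected V E \<longleftrightarrow> V \<noteq> {} \<and> (\<forall>u\<in>V. \<forall>v\<in>V. \<exists>n. gwalk V E u v n)"

definition gdist :: "nat set \<Rightarrow> (nat \<Rightarrow> nat \<Rightarrow> bool) \<Rightarrow> nat \<Rightarrow> nat \<Rightarrow> real" where
  "gdist V E u v = real (LEAST n. gwalk V E u v n)"

definition bounded_degree :: "nat set \<Rightarrow> (nat \<Rightarrow> nat \<Rightarrow> bool) \<Rightarrow> bool" where
  "bounded_degree V E \<longleftrightarrow> (\<exists>D::nat. \<forall>v\<in>V. finite {w\<in>V. E v w} \<and> card {w\<in>V. E v w} \<le> D)"

definition gball :: "nat set \<Rightarrow> (nat \<Rightarrow> nat \<Rightarrow> bool) \<Rightarrow> nat \<Rightarrow> real \<Rightarrow> nat set" where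
  "gball V E v l = {w\<in>V. gdist V E v w \<le> l}"

definition growth :: "nat set \<Rightarrow> (nat \<Rightarrow> nat \<Rightarrow> bool) \<Rightarrow> nat \<Rightarrow> real" where
  "growth V E l = (SUP v\<in>V. real (card (gball V E v (real l))))"

definition delta_paths :: "'a set \<Rightarrow> ('a \<Rightarrow> 'a \<Rightarrow> real) \<Rightarrow> nat \<Rightarrow> real \<Rightarrow> 'a \<Rightarrow> (nat \<Rightarrow> 'a) set" where
  "delta_paths S d n \<delta> x0 = {p \<in> {0..n} \<rightarrow>\<^sub>E S. p 0 = x0 \<and> (\<forall>i<n. d (p i) (p (Suc i)) \<le> \<delta>)}"

definition path_dist :: "('a \<Rightarrow> 'a \<Rightarrow> real) \<Rightarrow> nat \<Rightarrow> (nat \<Rightarrow> 'a) \<Rightarrow> (nat \<Rightarrow> 'a) \<Rightarrow> real" where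
  "path_dist d n p q = (MAX i\<in>{0..n}. d (p i) (q i))"

definition separated_count :: "'a set \<Rightarrow> ('a \<Rightarrow> 'a \<Rightarrow> real) \<Rightarrow> nat \<Rightarrow> real \<Rightarrow> real \<Rightarrow> 'a \<Rightarrow> ereal" where
  "separated_count S d n R \<delta> x0 = (SUP P \<in> {P. P \<subseteq> delta_paths S d n \<delta> x0 \<and> finite P \<and>
        (\<forall>p\<in>P. \<forall>q\<in>P. p \<noteq> q \<longrightarrow> path_dist d n p q > R)}. ereal (real (card P)))"

definition eln :: "ereal \<Rightarrow> ereal" where
  "eln s = (if s = \<infinity> then \<infinity> else ereal (ln (real_of_ereal s)))"

definition coarse_entropy :: "'a set \<Rightarrow> ('a \<Rightarrow> 'a \<Rightarrow> real) \<Rightarrow> 'a \<Rightarrow> ereal" where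
  "coarse_entropy S d x0 = Lim at_top (\<lambda>\<delta>::real. Lim at_top (\<lambda>R::real.
      limsup (\<lambda>n::nat. eln (separated_count S d n R \<delta> x0) / ereal (real n))))"

end

theory Submission
  imports Defs "HOL-Real_Asymp.Real_Asymp"
begin

text \<open>If X is not coarsely equivalent to a space of bounded geometry, then for some \<rho> the
  balls of radius \<rho> contain arbitrarily large R-separated sets: otherwise a maximal R-separated
  net would be such a space. Following quasigeodesics, a \<delta>-path can make an excursion from the
  centre of such a ball to any of its N separated points and back in a number L of steps that
  depends only on \<rho> and \<delta>; concatenating k excursions yields N^k pairwise R-separated paths of
  length about k L, so the entropy at scales (\<delta>, R) is at least (ln N) / L for every N.

  If X is coarsely equivalent to a space T of bounded geometry, joining the points of T at
  bounded distance gives a graph G of bounded degree quasi-isometric to X. A \<delta>-path of length n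
  is determined up to distance about 2 k \<delta> by its samples at every k-th step, whose images form a
  walk in G with jumps of length at most l \<approx> k \<delta>; hence the entropy at scales (\<delta>, 2 k \<delta>) is at
  most ln |B(l)| / k, which tends to 0 as k grows if G has subexponential growth. If instead
  |B(l)| grows at exponential rate c along a sequence of l, a ball of radius l contains about
  e^(c l) points that are separated at scale R, and the excursion argument applied to their
  preimages bounds the entropy at scales (\<delta>, R) from below by a multiple of c \<delta>.\<close>

section \<open>Entropy at fixed scales\<close>

definition separated :: "('a \<Rightarrow> 'a \<Rightarrow> real) \<Rightarrow> real \<Rightarrow> 'a set \<Rightarrow> bool" where
  "separated d r Y \<longleftrightarrow> (\<forall>a\<in>Y. \<forall>b\<in>Y. a \<noteq> b \<longrightarrow> d a b > r)"

lemma separated_subset: "separated d r Y \<Longrightarrow> Z \<subseteq> Y \<Longrightarrow> separated d r Z"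
  unfolding separated_def by blast

definition scale_entropy :: "'a set \<Rightarrow> ('a \<Rightarrow> 'a \<Rightarrow> real) \<Rightarrow> real \<Rightarrow> real \<Rightarrow> 'a \<Rightarrow> ereal" where
  "scale_entropy S d \<delta> R x0 = limsup (\<lambda>n. eln (separated_count S d n R \<delta> x0) / ereal (real n))"

lemma coarse_entropy_eq_Lim_scale_entropy:
  "coarse_entropy S d x0 = Lim at_top (\<lambda>\<delta>. Lim at_top (\<lambda>R. scale_entropy S d \<delta> R x0))"
  unfolding coarse_entropy_def scale_entropy_def ..

lemma le_path_dist: "t \<le> n \<Longrightarrow> d (p t) (q t) \<le> path_dist d n p q"
  unfolding path_dist_def by (intro Max_ge) auto

lemma card_le_separated_count:
  assumes "P \<subseteq> delta_paths S d n \<delta> x0" "finite P" "separated (path_dist d n) R P"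
  shows "ereal (real (card P)) \<le> separated_count S d n R \<delta> x0"
  unfolding separated_count_def by (rule SUP_upper) (use assms in \<open>auto simp: separated_def\<close>)

lemma separated_count_le:
  assumes "\<And>P. P \<subseteq> delta_paths S d n \<delta> x0 \<Longrightarrow> finite P \<Longrightarrow> separated (path_dist d n) R P
      \<Longrightarrow> real (card P) \<le> K"
  shows "separated_count S d n R \<delta> x0 \<le> ereal K"
  unfolding separated_count_def by (rule SUP_least) (use assms in \<open>auto simp: separated_def\<close>)

lemma separated_count_antimono:
  "R \<le> R' \<Longrightarrow> separated_count S d n R' \<delta> x0 \<le> separated_count S d n R \<delta> x0"
  unfolding separated_count_def by (rule SUP_subset_mono) force+

lemma one_le_separated_count:
  assumes "Metric_space S d" "x0 \<in> S" "\<delta> \<ge> 0"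
  shows "1 \<le> separated_count S d n R \<delta> x0"
proof -
  let ?p = "\<lambda>i\<in>{0..n}. x0"
  have "d x0 x0 = 0"
    using Metric_space.zero[OF assms(1)] assms(2) by simp
  then have "?p \<in> delta_paths S d n \<delta> x0"
    using assms unfolding delta_paths_def by auto
  then have "ereal (real (card {?p})) \<le> separated_count S d n R \<delta> x0"
    by (intro card_le_separated_count) (auto simp: separated_def)
  then show ?thesis by (simp add: one_ereal_def)
qed

lemma ln_le_eln: "1 \<le> c \<Longrightarrow> ereal c \<le> s \<Longrightarrow> ereal (ln c) \<le> eln s"
  by (cases s) (auto simp: eln_def)

lemma eln_le_ln: "1 \<le> s \<Longrightarrow> s \<le> ereal b \<Longrightarrow> eln s \<le> ereal (ln b)"
  by (cases s) (auto simp: eln_def)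

lemma eln_mono: "1 \<le> a \<Longrightarrow> a \<le> b \<Longrightarrow> eln a \<le> eln b"
  by (cases a; cases b) (auto simp: eln_def)

lemma scale_entropy_nonneg:
  assumes "Metric_space S d" "x0 \<in> S" "\<delta> \<ge> 0"
  shows "0 \<le> scale_entropy S d \<delta> R x0"
  unfolding scale_entropy_def
proof (rule le_Limsup)
  show "\<forall>\<^sub>F n in sequentially. 0 \<le> eln (separated_count S d n R \<delta> x0) / ereal (real n)"
  proof (rule eventually_sequentiallyI[of 1])
    fix n :: nat assume "1 \<le> n"
    have "ereal (ln 1) \<le> eln (separated_count S d n R \<delta> x0)"
      using one_le_separated_count[OF assms] by (intro ln_le_eln) (auto simp: one_ereal_def)
    then show "0 \<le> eln (separated_count S d n R \<delta> x0) / ereal (real n)"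
      using ereal_divide_right_mono[of 0 _ "ereal (real n)"] \<open>1 \<le> n\<close> by (simp add: zero_ereal_def)
  qed
qed simp

lemma scale_entropy_antimono:
  assumes "Metric_space S d" "x0 \<in> S" "\<delta> \<ge> 0" "R \<le> R'"
  shows "scale_entropy S d \<delta> R' x0 \<le> scale_entropy S d \<delta> R x0"
  unfolding scale_entropy_def
proof (rule Limsup_mono, rule eventually_sequentiallyI[of 1])
  fix n :: nat assume "1 \<le> n"
  then show "eln (separated_count S d n R' \<delta> x0) / ereal (real n)
      \<le> eln (separated_count S d n R \<delta> x0) / ereal (real n)"
    using one_le_separated_count[OF assms(1-3)] separated_count_antimono[OF assms(4)]
    by (intro ereal_divide_right_mono eln_mono) auto
qed

lemma real_div_minus_one_le_div: "0 < m \<Longrightarrow> real n / real m - 1 \<le> real (n div m)"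
proof -
  assume m: "0 < m"
  have "n = m * (n div m) + n mod m" by simp
  then have "real n = real m * real (n div m) + real (n mod m)"
    by (metis of_nat_add of_nat_mult)
  moreover have "real (n mod m) < real m" using m by simp
  ultimately have "real n < real m * (real (n div m) + 1)" by (simp add: algebra_simps)
  then show ?thesis using m by (simp add: field_simps)
qed

lemma ln_div_le_scale_entropy:
  assumes "Metric_space S d" "x0 \<in> S" "\<delta> \<ge> 0" "N \<ge> 1" "m > 0"
    and count: "\<forall>n\<ge>n0. ereal (real N ^ ((n - n0) div m)) \<le> separated_count S d n R \<delta> x0"
  shows "ereal (ln (real N) / real m) \<le> scale_entropy S d \<delta> R x0"
proof -
  define lower where "lower n = ((real n - real n0) / real m - 1) * ln (real N) / real n" for n :: nat
  have "lower \<longlonglongrightarrow> inverse (real m) * ln (real N)"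
    unfolding lower_def using \<open>m > 0\<close> by real_asymp
  then have "lower \<longlonglongrightarrow> ln (real N) / real m"
    by (simp add: field_simps)
  then have "limsup (\<lambda>n. ereal (lower n)) = ereal (ln (real N) / real m)"
    by (intro lim_imp_Limsup tendsto_ereal) auto
  moreover have "\<forall>\<^sub>F n in sequentially.
      ereal (lower n) \<le> eln (separated_count S d n R \<delta> x0) / ereal (real n)"
  proof (rule eventually_sequentiallyI[of "max n0 1"])
    fix n :: nat assume n: "max n0 1 \<le> n"
    define q where "q = (n - n0) div m"
    have "(real n - real n0) / real m - 1 \<le> real q"
    proof -
      have "real (n - n0) = real n - real n0" using n by simp
      then show ?thesis
        using real_div_minus_one_le_div[OF \<open>m > 0\<close>, of "n - n0"] unfolding q_def by simp
    qed
    then have "((real n - real n0) / real m - 1) * ln (real N) \<le> real q * ln (real N)"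
      using \<open>N \<ge> 1\<close> by (intro mult_right_mono) auto
    then have "ereal (lower n) \<le> ereal (real q * ln (real N) / real n)"
      unfolding lower_def by (intro ereal_less_eq(3)[THEN iffD2] divide_right_mono) auto
    also have "\<dots> = ereal (real q * ln (real N)) / ereal (real n)"
      using n by simp
    also have "\<dots> \<le> eln (separated_count S d n R \<delta> x0) / ereal (real n)"
    proof -
      have "ereal (ln (real N ^ q)) \<le> eln (separated_count S d n R \<delta> x0)"
        using count n \<open>N \<ge> 1\<close> unfolding q_def by (intro ln_le_eln) auto
      then have "ereal (real q * ln (real N)) \<le> eln (separated_count S d n R \<delta> x0)"
        using \<open>N \<ge> 1\<close> by (simp add: ln_realpow)
      then show ?thesis
        using n by (intro ereal_divide_right_mono) auto
    qed
    finally show "ereal (lower n) \<le> eln (separated_count S d n R \<delta> x0) / ereal (real n)" .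
  qed
  then have "limsup (\<lambda>n. ereal (lower n)) \<le> scale_entropy S d \<delta> R x0"
    unfolding scale_entropy_def by (rule Limsup_mono)
  ultimately show ?thesis by simp
qed

lemma scale_entropy_le_ln_div:
  assumes "Metric_space S d" "x0 \<in> S" "\<delta> \<ge> 0" "B \<ge> 1" "k > 0"
    and count: "\<forall>n\<ge>1. separated_count S d n R \<delta> x0 \<le> ereal (B ^ (n div k + 1))"
  shows "scale_entropy S d \<delta> R x0 \<le> ereal (ln B / real k)"
proof -
  define upper where "upper n = (real n / real k + 1) * ln B / real n" for n :: nat
  have "upper \<longlonglongrightarrow> inverse (real k) * ln B"
    unfolding upper_def using \<open>k > 0\<close> by real_asymp
  then have "upper \<longlonglongrightarrow> ln B / real k"
    by (simp add: field_simps)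
  then have "limsup (\<lambda>n. ereal (upper n)) = ereal (ln B / real k)"
    by (intro lim_imp_Limsup tendsto_ereal) auto
  moreover have "\<forall>\<^sub>F n in sequentially.
      eln (separated_count S d n R \<delta> x0) / ereal (real n) \<le> ereal (upper n)"
  proof (rule eventually_sequentiallyI[of 1])
    fix n :: nat assume n: "1 \<le> n"
    define q where "q = n div k + 1"
    have "eln (separated_count S d n R \<delta> x0) \<le> ereal (ln (B ^ q))"
      using count n one_le_separated_count[OF assms(1-3)] unfolding q_def by (intro eln_le_ln) auto
    then have "eln (separated_count S d n R \<delta> x0) \<le> ereal (real q * ln B)"
      using \<open>B \<ge> 1\<close> by (simp add: ln_realpow)
    then have "eln (separated_count S d n R \<delta> x0) / ereal (real n) \<le> ereal (real q * ln B) / ereal (real n)"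
      using n by (intro ereal_divide_right_mono) auto
    also have "\<dots> = ereal (real q * ln B / real n)"
      using n by simp
    also have "\<dots> \<le> ereal (upper n)"
      using of_nat_div_le_of_nat[of n k] \<open>B \<ge> 1\<close> unfolding upper_def q_def
      by (intro ereal_less_eq(3)[THEN iffD2] divide_right_mono mult_right_mono) auto
    finally show "eln (separated_count S d n R \<delta> x0) / ereal (real n) \<le> ereal (upper n)" .
  qed
  then have "scale_entropy S d \<delta> R x0 \<le> limsup (\<lambda>n. ereal (upper n))"
    unfolding scale_entropy_def by (rule Limsup_mono)
  ultimately show ?thesis by simp
qed

lemma tendsto_INF_at_top_if_antimono:
  fixes f :: "real \<Rightarrow> 'b::{complete_linorder, linorder_topology}"
  assumes "\<And>x y. x0 \<le> x \<Longrightarrow> x \<le> y \<Longrightarrow> f y \<le> f x"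
  shows "(f \<longlongrightarrow> (INF x\<in>{x0..}. f x)) at_top"
proof (rule order_tendstoI)
  fix a assume "(INF x\<in>{x0..}. f x) < a"
  then obtain x where "x \<in> {x0..}" "f x < a" by (auto simp: INF_less_iff)
  then show "\<forall>\<^sub>F y in at_top. f y < a"
    using assms by (intro eventually_at_top_linorderI[of x]) (auto intro: le_less_trans)
next
  fix a assume "a < (INF x\<in>{x0..}. f x)"
  then have "\<forall>x\<ge>x0. a < f x" using less_INF_D by fastforce
  then show "\<forall>\<^sub>F y in at_top. a < f y" by (intro eventually_at_top_linorderI[of x0]) auto
qed

lemma coarse_entropy_eq_zero:
  assumes "\<And>\<delta>. \<delta> \<ge> \<delta>0 \<Longrightarrow> ((\<lambda>R. scale_entropy S d \<delta> R x0) \<longlongrightarrow> 0) at_top"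
  shows "coarse_entropy S d x0 = 0"
proof -
  have "\<forall>\<^sub>F \<delta> in at_top. Lim at_top (\<lambda>R. scale_entropy S d \<delta> R x0) = 0"
    using assms by (intro eventually_at_top_linorderI[of \<delta>0] tendsto_Lim) auto
  then show ?thesis
    unfolding coarse_entropy_eq_Lim_scale_entropy by (intro tendsto_Lim tendsto_eventually) auto
qed

lemma coarse_entropy_eq_infinity:
  assumes "Metric_space S d" "x0 \<in> S" "\<delta>0 \<ge> 0"
    and c: "filterlim c at_top at_top"
    and lower: "\<And>\<delta> R. \<delta> \<ge> \<delta>0 \<Longrightarrow> R \<ge> R0 \<Longrightarrow> ereal (c \<delta>) \<le> scale_entropy S d \<delta> R x0"
  shows "coarse_entropy S d x0 = \<infinity>"
  unfolding coarse_entropy_eq_Lim_scale_entropy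
proof (rule tendsto_Lim, simp, unfold tendsto_PInfty, intro allI)
  fix r :: real
  have "\<forall>\<^sub>F \<delta> in at_top. c \<delta> > r \<and> \<delta> \<ge> \<delta>0"
    using c by (auto simp: filterlim_at_top_dense intro: eventually_conj eventually_ge_at_top)
  then show "\<forall>\<^sub>F \<delta> in at_top. ereal r < Lim at_top (\<lambda>R. scale_entropy S d \<delta> R x0)"
  proof eventually_elim
    case (elim \<delta>)
    have "((\<lambda>R. scale_entropy S d \<delta> R x0) \<longlongrightarrow> (INF R\<in>{R0..}. scale_entropy S d \<delta> R x0)) at_top"
      using elim assms by (intro tendsto_INF_at_top_if_antimono scale_entropy_antimono) auto
    then have "Lim at_top (\<lambda>R. scale_entropy S d \<delta> R x0) = (INF R\<in>{R0..}. scale_entropy S d \<delta> R x0)"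
      by (intro tendsto_Lim) auto
    moreover have "ereal (c \<delta>) \<le> (INF R\<in>{R0..}. scale_entropy S d \<delta> R x0)"
      using lower elim by (intro INF_greatest) auto
    ultimately show ?case
      using elim by (metis ereal_less_eq(3) less_le_trans not_le)
  qed
qed

section \<open>Chains along quasigeodesics\<close>

definition quasigeodesic_with :: "real \<Rightarrow> real \<Rightarrow> 'a set \<Rightarrow> ('a \<Rightarrow> 'a \<Rightarrow> real) \<Rightarrow> bool" where
  "quasigeodesic_with C A S d \<longleftrightarrow> C \<ge> 1 \<and> A \<ge> 0 \<and> (\<forall>x\<in>S. \<forall>x'\<in>S. \<exists>p :: real \<Rightarrow> 'a.
        p 0 = x \<and> p (d x x') = x' \<and> p ` {0..d x x'} \<subseteq> S \<and>
        (\<forall>s\<in>{0..d x x'}. \<forall>t\<in>{0..d x x'}.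
            \<bar>s - t\<bar> / C - A \<le> d (p s) (p t) \<and> d (p s) (p t) \<le> C * \<bar>s - t\<bar> + A))"

lemma quasigeodesic_iff_with: "quasigeodesic S d \<longleftrightarrow> (\<exists>C A. quasigeodesic_with C A S d)"
  unfolding quasigeodesic_def quasigeodesic_with_def by blast

lemma quasigeodesic_with_consts: "quasigeodesic_with C A S d \<Longrightarrow> C \<ge> 1 \<and> A \<ge> 0"
  unfolding quasigeodesic_with_def by blast

lemma quasigeodesic_pathE:
  assumes "quasigeodesic_with C A S d" "x \<in> S" "x' \<in> S"
  obtains p where "p 0 = x" "p (d x x') = x'" "\<And>s. s \<in> {0..d x x'} \<Longrightarrow> p s \<in> S"
    "\<And>s t. s \<in> {0..d x x'} \<Longrightarrow> t \<in> {0..d x x'} \<Longrightarrow> d (p s) (p t) \<le> C * \<bar>s - t\<bar> + A"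
proof -
  from assms(1)[unfolded quasigeodesic_with_def, THEN conjunct2, THEN conjunct2, rule_format, OF assms(2,3)]
  obtain p where "p 0 = x" "p (d x x') = x'" "p ` {0..d x x'} \<subseteq> S"
    "\<forall>s\<in>{0..d x x'}. \<forall>t\<in>{0..d x x'}. d (p s) (p t) \<le> C * \<bar>s - t\<bar> + A"
    by blast
  then show ?thesis using that by blast
qed

definition delta_chain :: "'a set \<Rightarrow> ('a \<Rightarrow> 'a \<Rightarrow> real) \<Rightarrow> real \<Rightarrow> (nat \<Rightarrow> 'a) \<Rightarrow> bool" where
  "delta_chain S d \<delta> f \<longleftrightarrow> (\<forall>j. f j \<in> S) \<and> (\<forall>j. d (f j) (f (Suc j)) \<le> \<delta>)"

lemma delta_chain_append:
  assumes "delta_chain S d \<delta> f" "delta_chain S d \<delta> g" "f L = g 0"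
  shows "delta_chain S d \<delta> (\<lambda>t. if t < L then f t else g (t - L))"
  unfolding delta_chain_def
proof (intro conjI allI)
  fix t
  consider "Suc t < L" | "Suc t = L" | "L \<le> t" by linarith
  then show "d (if t < L then f t else g (t - L)) (if Suc t < L then f (Suc t) else g (Suc t - L)) \<le> \<delta>"
  proof cases
    case 2
    then have "g (Suc t - L) = f (Suc t)" using assms(3) by simp
    moreover have "d (f t) (f (Suc t)) \<le> \<delta>" using assms(1) unfolding delta_chain_def by blast
    ultimately show ?thesis using 2 by simp
  next
    case 3
    then have "Suc t - L = Suc (t - L)" by simp
    then show ?thesis using 3 assms(2) unfolding delta_chain_def by simp
  qed (use assms in \<open>auto simp: delta_chain_def\<close>)
qed (use assms in \<open>auto simp: delta_chain_def\<close>)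

lemma delta_chain_concat_loops:
  assumes "\<And>i. delta_chain S d \<delta> (g i)" "\<And>i. g i 0 = x" "\<And>i. g i m = x" "m > 0"
  shows "delta_chain S d \<delta> (\<lambda>t. g (t div m) (t mod m))"
  unfolding delta_chain_def
proof (intro conjI allI)
  fix t
  show "d (g (t div m) (t mod m)) (g (Suc t div m) (Suc t mod m)) \<le> \<delta>"
  proof (cases "Suc (t mod m) = m")
    case True
    then have "g (Suc t div m) (Suc t mod m) = g (t div m) (Suc (t mod m))"
      using assms(2,3) \<open>m > 0\<close> by (simp add: mod_Suc div_Suc)
    then show ?thesis using assms(1) unfolding delta_chain_def by metis
  next
    case False
    then show ?thesis using assms(1) \<open>m > 0\<close> by (simp add: mod_Suc div_Suc delta_chain_def)
  qed
qed (use assms in \<open>auto simp: delta_chain_def\<close>)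

lemma delta_chain_in_delta_paths:
  "delta_chain S d \<delta> f \<Longrightarrow> f 0 = x0 \<Longrightarrow> restrict f {0..n} \<in> delta_paths S d n \<delta> x0"
  unfolding delta_chain_def delta_paths_def by auto

context Metric_space
begin

lemma delta_chain_const: "x \<in> M \<Longrightarrow> \<delta> \<ge> 0 \<Longrightarrow> delta_chain M d \<delta> (\<lambda>_. x)"
  unfolding delta_chain_def by simp

lemma delta_chain_along_quasigeodesic:
  assumes q: "quasigeodesic_with C A M d" and "x \<in> M" "z \<in> M" "\<delta> > A"
    and L: "d x z \<le> real L * ((\<delta> - A) / C)"
  obtains f where "delta_chain M d \<delta> f" "f 0 = x" "\<And>j. j \<ge> L \<Longrightarrow> f j = z"
proof -
  define h where "h = (\<delta> - A) / C" \<comment> \<open>sampling the quasigeodesic at spacing h gives steps of length at most C h + A = \<delta>\<close>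
  have C: "C \<ge> 1" and "A \<ge> 0" using quasigeodesic_with_consts[OF q] by auto
  have h: "h > 0" unfolding h_def using C \<open>\<delta> > A\<close> by auto
  obtain p where p0: "p 0 = x" and pz: "p (d x z) = z" and pM: "\<And>s. s \<in> {0..d x z} \<Longrightarrow> p s \<in> M"
    and pd: "\<And>s t. s \<in> {0..d x z} \<Longrightarrow> t \<in> {0..d x z} \<Longrightarrow> d (p s) (p t) \<le> C * \<bar>s - t\<bar> + A"
    using quasigeodesic_pathE[OF q \<open>x \<in> M\<close> \<open>z \<in> M\<close>] by blast
  define f where "f j = p (min (real j * h) (d x z))" for j
  have "delta_chain M d \<delta> f"
    unfolding delta_chain_def
  proof (intro conjI allI)
    fix j
    show "f j \<in> M" unfolding f_def using h by (intro pM) auto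
    have "\<bar>min (real j * h) (d x z) - min (real (Suc j) * h) (d x z)\<bar> \<le> h"
      using h by (auto simp: min_def algebra_simps)
    then have "d (f j) (f (Suc j)) \<le> C * h + A"
      unfolding f_def using h C
      by (intro order.trans[OF pd] add_right_mono mult_left_mono) auto
    also have "\<dots> = \<delta>" unfolding h_def using C by simp
    finally show "d (f j) (f (Suc j)) \<le> \<delta>" .
  qed
  moreover have "f 0 = x" unfolding f_def using p0 by simp
  moreover have "f j = z" if "j \<ge> L" for j
  proof -
    have "d x z \<le> real j * h"
      using L that h unfolding h_def by (meson mult_right_mono of_nat_le_iff order.trans less_imp_le)
    then show ?thesis unfolding f_def using pz by simp
  qed
  ultimately show ?thesis using that by blast
qed

lemma excursion_loopsE:
  assumes q: "quasigeodesic_with C A M d" and "x \<in> M" "Z \<subseteq> M" "\<delta> > A" "L > 0"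
    and near: "\<And>z. z \<in> Z \<Longrightarrow> d x z \<le> real L * ((\<delta> - A) / C)"
  obtains loop where "\<And>z. delta_chain M d \<delta> (loop z)" "\<And>z. loop z 0 = x" "\<And>z. loop z (2 * L) = x"
    "\<And>z. z \<in> Z \<Longrightarrow> loop z L = z"
proof -
  have "\<exists>g. delta_chain M d \<delta> g \<and> g 0 = x \<and> g (2 * L) = x \<and> (z \<in> Z \<longrightarrow> g L = z)" for z
  proof (cases "z \<in> Z")
    case True
    then have "z \<in> M" using \<open>Z \<subseteq> M\<close> by blast
    obtain out where out: "delta_chain M d \<delta> out" "out 0 = x" "\<And>j. j \<ge> L \<Longrightarrow> out j = z"
      using delta_chain_along_quasigeodesic[OF q \<open>x \<in> M\<close> \<open>z \<in> M\<close> \<open>\<delta> > A\<close> near[OF True]] by blast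
    obtain home where home: "delta_chain M d \<delta> home" "home 0 = z" "\<And>j. j \<ge> L \<Longrightarrow> home j = x"
      using delta_chain_along_quasigeodesic[OF q \<open>z \<in> M\<close> \<open>x \<in> M\<close> \<open>\<delta> > A\<close>] near[OF True] commute
      by metis
    have "delta_chain M d \<delta> (\<lambda>t. if t < L then out t else home (t - L))"
      using out home by (intro delta_chain_append) auto
    then show ?thesis using out home \<open>L > 0\<close> by (intro exI[of _ "\<lambda>t. if t < L then out t else home (t - L)"]) auto
  next
    case False
    have "\<delta> \<ge> 0" using quasigeodesic_with_consts[OF q] \<open>\<delta> > A\<close> by simp
    then show ?thesis using False \<open>x \<in> M\<close> by (intro exI[of _ "\<lambda>_. x"]) (auto intro: delta_chain_const)
  qed
  then obtain loop where "\<And>z. delta_chain M d \<delta> (loop z) \<and> loop z 0 = x \<and> loop z (2 * L) = x \<and> (z \<in> Z \<longrightarrow> loop z L = z)"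
    by metis
  then show ?thesis using that by blast
qed

lemma card_power_le_separated_count:
  assumes chain: "\<And>w. delta_chain M d \<delta> (P w)" "\<And>w. P w 0 = x0"
    and visit: "\<And>w i. w i \<in> Z \<Longrightarrow> P w (n0 + m * i + c) = w i" and "c < m"
    and "finite Z" and sep: "separated d R Z" and "n \<ge> n0"
  shows "ereal (real (card Z) ^ ((n - n0) div m)) \<le> separated_count M d n R \<delta> x0"
proof -
  define k where "k = (n - n0) div m"
  define W where "W = {0..<k} \<rightarrow>\<^sub>E Z"
  define rp where "rp w = restrict (P w) {0..n}" for w
  have visit_le_n: "n0 + m * i + c \<le> n" if "i < k" for i
  proof -
    have "m * (i + 1) \<le> m * k" using that by (intro mult_left_mono) auto
    also have "m * k \<le> n - n0" unfolding k_def by simp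
    finally show ?thesis using \<open>c < m\<close> \<open>n \<ge> n0\<close> by simp
  qed
  have rp_visit: "rp w (n0 + m * i + c) = w i" if "w \<in> W" "i < k" for w i
    using that visit visit_le_n unfolding rp_def W_def by (auto simp: PiE_iff)
  have "separated (path_dist d n) R (rp ` W)"
    unfolding separated_def
  proof (intro ballI impI)
    fix p q assume "p \<in> rp ` W" "q \<in> rp ` W" "p \<noteq> q"
    then obtain w w' where w: "w \<in> W" "w' \<in> W" "p = rp w" "q = rp w'" "w \<noteq> w'" by blast
    then obtain i where i: "i < k" "w i \<noteq> w' i"
      unfolding W_def by (metis PiE_ext atLeastLessThan_iff zero_le)
    then have "R < d (w i) (w' i)" using w sep unfolding W_def separated_def by (auto simp: PiE_iff)
    also have "\<dots> = d (p (n0 + m * i + c)) (q (n0 + m * i + c))"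
      using rp_visit[OF w(1) i(1)] rp_visit[OF w(2) i(1)] w(3,4) by simp
    also have "\<dots> \<le> path_dist d n p q"
      using visit_le_n[OF i(1)] by (rule le_path_dist)
    finally show "R < path_dist d n p q" .
  qed
  moreover have "inj_on rp W"
  proof (rule inj_onI)
    fix w w' assume w: "w \<in> W" "w' \<in> W" "rp w = rp w'"
    have eq: "w i = w' i" if "i < k" for i
      using rp_visit[OF w(1) that] rp_visit[OF w(2) that] w(3) by simp
    show "w = w'" using w(1,2) unfolding W_def by (rule PiE_ext) (use eq in auto)
  qed
  then have "card (rp ` W) = card Z ^ k"
    using \<open>finite Z\<close> unfolding W_def by (simp add: card_image card_PiE)
  moreover have "rp ` W \<subseteq> delta_paths M d n \<delta> x0"
    unfolding rp_def using chain by (auto intro: delta_chain_in_delta_paths)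
  moreover have "finite (rp ` W)"
    using \<open>finite Z\<close> unfolding W_def by (auto intro: finite_PiE)
  ultimately show ?thesis
    using card_le_separated_count[of "rp ` W"] unfolding k_def by simp
qed

text \<open>The chains leave x0 for x and then make excursions from x, the i-th one visiting the
  i-th point of a word over Z; distinct words give R-separated chains.\<close>
lemma ln_card_le_scale_entropy:
  assumes q: "quasigeodesic_with C A M d" and "x0 \<in> M" "x \<in> M" "\<delta> > A"
    and Z: "finite Z" "Z \<subseteq> M" "Z \<noteq> {}" "separated d R Z" "\<And>z. z \<in> Z \<Longrightarrow> d x z \<le> \<rho>"
  shows "ereal (ln (real (card Z)) / real (2 * (nat \<lceil>\<rho> / ((\<delta> - A) / C)\<rceil> + 1)))
    \<le> scale_entropy M d \<delta> R x0"
proof -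
  define h where "h = (\<delta> - A) / C"
  define L where "L = nat \<lceil>\<rho> / h\<rceil> + 1"
  define L0 where "L0 = nat \<lceil>d x0 x / h\<rceil> + 1"
  have C: "C \<ge> 1" and "A \<ge> 0" using quasigeodesic_with_consts[OF q] by auto
  have h: "h > 0" unfolding h_def using C \<open>\<delta> > A\<close> by simp
  have "L > 0" unfolding L_def by simp
  have "\<delta> \<ge> 0" using \<open>A \<ge> 0\<close> \<open>\<delta> > A\<close> by simp
  have "d x0 x / h \<le> real L0" unfolding L0_def by linarith
  then obtain q0 where q0: "delta_chain M d \<delta> q0" "q0 0 = x0" "q0 L0 = x"
    using delta_chain_along_quasigeodesic[OF q \<open>x0 \<in> M\<close> \<open>x \<in> M\<close> \<open>\<delta> > A\<close>, of L0] h
    unfolding h_def by (metis order_refl pos_divide_le_eq)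
  have "d x z \<le> real L * h" if "z \<in> Z" for z
  proof -
    have "\<rho> / h \<le> real L" unfolding L_def by linarith
    then show ?thesis using Z(5)[OF that] h by (simp add: pos_divide_le_eq)
  qed
  then obtain loop where loop: "\<And>z. delta_chain M d \<delta> (loop z)" "\<And>z. loop z 0 = x"
    "\<And>z. loop z (2 * L) = x" "\<And>z. z \<in> Z \<Longrightarrow> loop z L = z"
    using excursion_loopsE[OF q \<open>x \<in> M\<close> Z(2) \<open>\<delta> > A\<close>, of L] unfolding h_def L_def by auto
  define P where "P w t = (if t < L0 then q0 t else loop (w ((t - L0) div (2 * L))) ((t - L0) mod (2 * L)))"
    for w :: "nat \<Rightarrow> 'a" and t
  have "delta_chain M d \<delta> (P w)" for w
    unfolding P_def using q0 loop
    by (intro delta_chain_append delta_chain_concat_loops) (auto simp: L_def)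
  moreover have "P w 0 = x0" for w unfolding P_def L0_def using q0 by simp
  moreover have "P w (L0 + 2 * L * i + L) = w i" if "w i \<in> Z" for w i
  proof -
    have "(2 * L * i + L) div (2 * L) = i" "(2 * L * i + L) mod (2 * L) = L"
      using \<open>L > 0\<close> by auto
    then show ?thesis unfolding P_def using loop(4)[OF that] by simp
  qed
  ultimately have "\<forall>n\<ge>L0. ereal (real (card Z) ^ ((n - L0) div (2 * L))) \<le> separated_count M d n R \<delta> x0"
    using Z \<open>L > 0\<close>
    by (intro allI impI card_power_le_separated_count[where P = P and m = "2 * L" and c = L]) auto
  moreover have "card Z \<ge> 1" using Z by (simp add: Suc_leI card_gt_0_iff)
  ultimately have "ereal (ln (real (card Z)) / real (2 * L)) \<le> scale_entropy M d \<delta> R x0"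
    using \<open>L > 0\<close> by (intro ln_div_le_scale_entropy[OF Metric_space_axioms \<open>x0 \<in> M\<close> \<open>\<delta> \<ge> 0\<close>]) auto
  then show ?thesis unfolding L_def h_def .
qed

lemma delta_path_dist_le:
  assumes "p \<in> delta_paths M d n \<delta> x0" "a \<le> b" "b \<le> n"
  shows "d (p a) (p b) \<le> real (b - a) * \<delta>"
  using assms(2,3)
proof (induction b)
  case 0
  have "p 0 \<in> M" using assms(1) unfolding delta_paths_def by auto
  then show ?case using 0 by simp
next
  case (Suc b)
  have in_M: "p i \<in> M" if "i \<le> n" for i using assms(1) that unfolding delta_paths_def by auto
  show ?case
  proof (cases "a = Suc b")
    case False
    then have "a \<le> b" using Suc.prems by simp
    have "d (p a) (p (Suc b)) \<le> d (p a) (p b) + d (p b) (p (Suc b))"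
      using in_M Suc.prems \<open>a \<le> b\<close> by (intro triangle) auto
    also have "\<dots> \<le> real (b - a) * \<delta> + \<delta>"
      using Suc \<open>a \<le> b\<close> assms(1) unfolding delta_paths_def by (intro add_mono) auto
    also have "\<dots> = real (Suc b - a) * \<delta>" using \<open>a \<le> b\<close> by (simp add: Suc_diff_le algebra_simps)
    finally show ?thesis .
  qed (use in_M Suc.prems in simp)
qed

lemma delta_path_dist_le_mult:
  assumes "p \<in> delta_paths M d n \<delta> x0" "a \<le> b" "b \<le> n" "b - a \<le> m" "\<delta> \<ge> 0"
  shows "d (p a) (p b) \<le> real m * \<delta>"
proof -
  have "d (p a) (p b) \<le> real (b - a) * \<delta>" using assms(1-3) by (rule delta_path_dist_le)
  also have "\<dots> \<le> real m * \<delta>" using assms(4,5) by (intro mult_right_mono) auto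
  finally show ?thesis .
qed

end

section \<open>Spaces without coarsely bounded geometry\<close>

lemma maximal_separated_subsetE:
  assumes "\<And>x. x \<in> S \<Longrightarrow> f x x \<le> r"
  obtains Q where "Q \<subseteq> S" "separated f r Q" "\<And>x. x \<in> S \<Longrightarrow> \<exists>y\<in>Q. f x y \<le> r \<or> f y x \<le> r"
proof -
  define \<A> where "\<A> = {Y. Y \<subseteq> S \<and> separated f r Y}"
  have "\<exists>Q\<in>\<A>. \<forall>Y\<in>\<A>. Q \<subseteq> Y \<longrightarrow> Y = Q"
  proof (rule subset_Zorn')
    fix Ch assume ch: "subset.chain \<A> Ch"
    show "\<Union> Ch \<in> \<A>" unfolding \<A>_def separated_def
    proof safe
      fix a b Ya Yb assume "a \<in> Ya" "Ya \<in> Ch" "b \<in> Yb" "Yb \<in> Ch" "a \<noteq> b"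
      from ch \<open>Ya \<in> Ch\<close> \<open>Yb \<in> Ch\<close> have "Ya \<subseteq> Yb \<or> Yb \<subseteq> Ya" "Ya \<in> \<A>" "Yb \<in> \<A>"
        by (auto simp: subset_chain_def)
      then obtain Y where "Y \<in> \<A>" "a \<in> Y" "b \<in> Y" using \<open>a \<in> Ya\<close> \<open>b \<in> Yb\<close> by blast
      then show "r < f a b" using \<open>a \<noteq> b\<close> unfolding \<A>_def separated_def by blast
    next
      fix a Y assume "a \<in> Y" "Y \<in> Ch"
      then show "a \<in> S" using ch by (auto simp: subset_chain_def \<A>_def)
    qed
  qed
  then obtain Q where "Q \<in> \<A>" and Qmax: "\<forall>Y\<in>\<A>. Q \<subseteq> Y \<longrightarrow> Y = Q" by blast
  then have "Q \<subseteq> S" "separated f r Q" unfolding \<A>_def by auto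
  moreover have "\<exists>y\<in>Q. f x y \<le> r \<or> f y x \<le> r" if "x \<in> S" for x
  proof (rule ccontr)
    assume far: "\<not> (\<exists>y\<in>Q. f x y \<le> r \<or> f y x \<le> r)"
    then have "x \<notin> Q" using assms \<open>x \<in> S\<close> by force
    moreover have "separated f r (insert x Q)"
      using \<open>separated f r Q\<close> far unfolding separated_def by auto
    then have "insert x Q \<in> \<A>" using \<open>Q \<subseteq> S\<close> \<open>x \<in> S\<close> unfolding \<A>_def by simp
    ultimately show False using Qmax by blast
  qed
  ultimately show ?thesis using that by blast
qed

context Metric_space
begin

lemma countable_if_bounded_geometry:
  assumes "bounded_geometry M d"
  shows "countable M"
proof (cases "M = {}")
  case False
  then obtain m0 where "m0 \<in> M" by blast
  have "M \<subseteq> (\<Union>k. {y\<in>M. d m0 y \<le> real k})"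
    using real_arch_simple by blast
  moreover have "finite {y\<in>M. d m0 y \<le> real k}" for k
  proof -
    have "finite {y\<in>M. d m0 y \<le> real (Suc k)}"
      using assms \<open>m0 \<in> M\<close> unfolding bounded_geometry_def by (metis of_nat_0_less_iff zero_less_Suc)
    then show ?thesis by (rule rev_finite_subset) auto
  qed
  then have "countable (\<Union>k. {y\<in>M. d m0 y \<le> real k})"
    by (intro countable_UN[of UNIV]) (auto intro: countable_finite)
  ultimately show ?thesis by (rule countable_subset)
qed simp

end

definition transport_dist :: "'b set \<Rightarrow> ('b \<Rightarrow> 'c) \<Rightarrow> ('b \<Rightarrow> 'b \<Rightarrow> real) \<Rightarrow> 'c \<Rightarrow> 'c \<Rightarrow> real" where
  "transport_dist N g e u v = e (inv_into N g u) (inv_into N g v)"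

lemma transport_dist_image:
  "inj_on g N \<Longrightarrow> a \<in> N \<Longrightarrow> b \<in> N \<Longrightarrow> transport_dist N g e (g a) (g b) = e a b"
  unfolding transport_dist_def by (simp add: inv_into_f_f)

lemma Metric_space_transport:
  assumes "Metric_space N e" "inj_on g N"
  shows "Metric_space (g ` N) (transport_dist N g e)"
proof
  fix u v w assume "u \<in> g ` N" "v \<in> g ` N" "w \<in> g ` N"
  then show "transport_dist N g e u w \<le> transport_dist N g e u v + transport_dist N g e v w"
    using transport_dist_image[OF assms(2)] Metric_space.triangle[OF assms(1)] by auto
next
  fix u v assume "u \<in> g ` N" "v \<in> g ` N"
  then show "transport_dist N g e u v = 0 \<longleftrightarrow> u = v"
    using transport_dist_image[OF assms(2)] Metric_space.zero[OF assms(1)] assms(2)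
    by (auto simp: inj_on_eq_iff)
qed (auto simp: transport_dist_def Metric_space.commute[OF assms(1)] Metric_space.nonneg[OF assms(1)])

lemma bounded_geometry_transport:
  assumes "bounded_geometry N e" "inj_on g N"
  shows "bounded_geometry (g ` N) (transport_dist N g e)"
  unfolding bounded_geometry_def
proof (intro allI impI)
  fix r :: real assume "r > 0"
  then obtain K where K: "\<forall>a\<in>N. finite {b\<in>N. e a b \<le> r} \<and> card {b\<in>N. e a b \<le> r} \<le> K"
    using assms(1) unfolding bounded_geometry_def by blast
  show "\<exists>K. \<forall>u\<in>g ` N. finite {v\<in>g ` N. transport_dist N g e u v \<le> r} \<and>
      card {v\<in>g ` N. transport_dist N g e u v \<le> r} \<le> K"
  proof (intro exI ballI)
    fix u assume "u \<in> g ` N"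
    then obtain a where "a \<in> N" "u = g a" by blast
    then have "{v\<in>g ` N. transport_dist N g e u v \<le> r} = g ` {b\<in>N. e a b \<le> r}"
      using transport_dist_image[OF assms(2)] by auto
    then show "finite {v\<in>g ` N. transport_dist N g e u v \<le> r} \<and>
        card {v\<in>g ` N. transport_dist N g e u v \<le> r} \<le> K"
      using K \<open>a \<in> N\<close> card_image_le[of "{b\<in>N. e a b \<le> r}" g] by auto
  qed
qed

lemma coarse_equivalence_transport:
  assumes "coarse_equivalence X d N e f" "inj_on g N"
  shows "coarse_equivalence X d (g ` N) (transport_dist N g e) (g \<circ> f)"
proof -
  obtain \<rho>m \<rho>p R where fX: "f ` X \<subseteq> N" and \<rho>: "mono \<rho>m" "mono \<rho>p" "filterlim \<rho>m at_top at_top"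
    "\<forall>x\<in>X. \<forall>x'\<in>X. \<rho>m (d x x') \<le> e (f x) (f x') \<and> e (f x) (f x') \<le> \<rho>p (d x x')"
    and dense: "\<forall>b\<in>N. \<exists>x\<in>X. e b (f x) \<le> R"
    using assms(1) unfolding coarse_equivalence_def by blast
  note image = transport_dist_image[OF assms(2)]
  have "transport_dist N g e ((g \<circ> f) x) ((g \<circ> f) x') = e (f x) (f x')" if "x \<in> X" "x' \<in> X" for x x'
    using image[of "f x" "f x'"] fX that by auto
  then have "\<forall>x\<in>X. \<forall>x'\<in>X. \<rho>m (d x x') \<le> transport_dist N g e ((g \<circ> f) x) ((g \<circ> f) x') \<and>
      transport_dist N g e ((g \<circ> f) x) ((g \<circ> f) x') \<le> \<rho>p (d x x')"
    using \<rho>(4) by simp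
  moreover have "\<exists>x\<in>X. transport_dist N g e v ((g \<circ> f) x) \<le> R" if v: "v \<in> g ` N" for v
  proof -
    obtain b where "b \<in> N" "v = g b" using v by blast
    moreover obtain x where "x \<in> X" "e b (f x) \<le> R" using dense \<open>b \<in> N\<close> by blast
    ultimately have "transport_dist N g e v ((g \<circ> f) x) \<le> R" using image[of b "f x"] fX by auto
    then show ?thesis using \<open>x \<in> X\<close> by blast
  qed
  ultimately show ?thesis
    unfolding coarse_equivalence_def using fX \<rho>(1-3)
    by (intro conjI exI[of _ \<rho>m] exI[of _ \<rho>p] exI[of _ R]) auto
qed

text \<open>The target of a coarse equivalence may be taken in any type, not only among sets of naturals.\<close>
lemma coarsely_bounded_geometryI:
  fixes N :: "'b set"
  assumes "Metric_space N e" "bounded_geometry N e" "coarse_equivalence X d N e f"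
  shows "coarsely_bounded_geometry X d"
proof -
  obtain g :: "'b \<Rightarrow> nat" where "inj_on g N"
    using Metric_space.countable_if_bounded_geometry[OF assms(1,2)] by (rule countableE)
  then show ?thesis
    unfolding coarsely_bounded_geometry_def using assms
    by (intro exI[of _ "g ` N"] exI[of _ "transport_dist N g e"] exI[of _ "g \<circ> f"])
      (simp add: Metric_space_transport bounded_geometry_transport coarse_equivalence_transport)
qed

context Metric_space
begin

lemma coarse_equivalence_to_net:
  assumes "Q \<subseteq> M" "\<And>x. x \<in> M \<Longrightarrow> \<exists>y\<in>Q. d x y \<le> r"
  obtains f where "coarse_equivalence M d Q d f"
proof -
  define f where "f x = (SOME y. y \<in> Q \<and> d x y \<le> r)" for x
  have f: "f x \<in> Q \<and> d x (f x) \<le> r" if "x \<in> M" for x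
  proof -
    have "\<exists>y. y \<in> Q \<and> d x y \<le> r" using assms(2)[OF that] by blast
    then show ?thesis unfolding f_def by (rule someI_ex)
  qed
  have "coarse_equivalence M d Q d f"
    unfolding coarse_equivalence_def
  proof (intro conjI exI)
    show "f ` M \<subseteq> Q" using f by blast
    show "mono (\<lambda>t::real. t - 2 * r)" "mono (\<lambda>t::real. t + 2 * r)" by (auto simp: mono_def)
    show "filterlim (\<lambda>t::real. t - 2 * r) at_top at_top" by real_asymp
    show "\<forall>x\<in>M. \<forall>x'\<in>M. d x x' - 2 * r \<le> d (f x) (f x') \<and> d (f x) (f x') \<le> d x x' + 2 * r"
    proof (intro ballI conjI)
      fix x x' assume x: "x \<in> M" "x' \<in> M"
      have in_M: "f x \<in> M" "f x' \<in> M" using f x assms(1) by auto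
      have "d x x' \<le> d x (f x) + d (f x) (f x') + d (f x') x'"
        "d (f x) (f x') \<le> d (f x) x + d x x' + d x' (f x')"
        using triangle x in_M by (meson add_mono order_refl order_trans)+
      then show "d x x' - 2 * r \<le> d (f x) (f x')" "d (f x) (f x') \<le> d x x' + 2 * r"
        using f[OF x(1)] f[OF x(2)] commute[of x "f x"] commute[of x' "f x'"] by linarith+
    qed
    show "\<forall>y\<in>Q. \<exists>x\<in>M. d y (f x) \<le> r"
      using f assms(1) by blast
  qed
  then show ?thesis by (rule that)
qed

text \<open>A maximal r-separated subset is a net; uniformly bounded separated sets in balls make
  the net of bounded geometry.\<close>
lemma coarsely_bounded_geometry_if_separated_bounded:
  assumes "r > 0"
    and bounded: "\<And>\<rho>. \<exists>K::nat. \<forall>x\<in>M. \<forall>Y\<subseteq>M. (\<forall>y\<in>Y. d x y \<le> \<rho>) \<and> separated d r Y \<longrightarrow> finite Y \<and> card Y \<le> K"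
  shows "coarsely_bounded_geometry M d"
proof -
  have "d x x \<le> r" if "x \<in> M" for x using that \<open>r > 0\<close> by simp
  then obtain Q where QM: "Q \<subseteq> M" and Qsep: "separated d r Q"
    and "\<And>x. x \<in> M \<Longrightarrow> \<exists>y\<in>Q. d x y \<le> r \<or> d y x \<le> r"
    using maximal_separated_subsetE[of M d r] by blast
  then obtain f where "coarse_equivalence M d Q d f"
    using coarse_equivalence_to_net commute by metis
  moreover have "Metric_space Q d" using QM by (rule subspace)
  moreover have "bounded_geometry Q d"
    unfolding bounded_geometry_def
  proof (intro allI impI)
    fix \<rho> :: real
    obtain K where K: "\<forall>x\<in>M. \<forall>Y\<subseteq>M. (\<forall>y\<in>Y. d x y \<le> \<rho>) \<and> separated d r Y \<longrightarrow> finite Y \<and> card Y \<le> K"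
      using bounded by blast
    have "finite {y\<in>Q. d x y \<le> \<rho>} \<and> card {y\<in>Q. d x y \<le> \<rho>} \<le> K" if "x \<in> Q" for x
    proof -
      have "{y\<in>Q. d x y \<le> \<rho>} \<subseteq> M" "separated d r {y\<in>Q. d x y \<le> \<rho>}"
        using QM separated_subset[OF Qsep] by auto
      then show ?thesis using K \<open>x \<in> Q\<close> QM by blast
    qed
    then show "\<exists>K. \<forall>x\<in>Q. finite {y\<in>Q. d x y \<le> \<rho>} \<and> card {y\<in>Q. d x y \<le> \<rho>} \<le> K" by blast
  qed
  ultimately show ?thesis by (intro coarsely_bounded_geometryI)
qed

lemma large_separated_sets_if_not_coarsely_bounded_geometry:
  assumes "\<not> coarsely_bounded_geometry M d" "r > 0"
  obtains \<rho> where "\<And>N. \<exists>x\<in>M. \<exists>Z\<subseteq>M. finite Z \<and> card Z = N \<and> separated d r Z \<and> (\<forall>z\<in>Z. d x z \<le> \<rho>)"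
proof -
  have "\<not> (\<forall>\<rho>. \<exists>K::nat. \<forall>x\<in>M. \<forall>Y\<subseteq>M. (\<forall>y\<in>Y. d x y \<le> \<rho>) \<and> separated d r Y \<longrightarrow> finite Y \<and> card Y \<le> K)"
    using coarsely_bounded_geometry_if_separated_bounded assms by metis
  then obtain \<rho> where "\<not> (\<exists>K::nat. \<forall>x\<in>M. \<forall>Y\<subseteq>M. (\<forall>y\<in>Y. d x y \<le> \<rho>) \<and> separated d r Y \<longrightarrow> finite Y \<and> card Y \<le> K)"
    by blast
  then have unbounded: "\<exists>x\<in>M. \<exists>Y\<subseteq>M. (\<forall>y\<in>Y. d x y \<le> \<rho>) \<and> separated d r Y \<and> \<not> (finite Y \<and> card Y \<le> K)"
    for K by blast
  have "\<exists>x\<in>M. \<exists>Z\<subseteq>M. finite Z \<and> card Z = N \<and> separated d r Z \<and> (\<forall>z\<in>Z. d x z \<le> \<rho>)" for N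
  proof -
    obtain x Y where Y: "x \<in> M" "Y \<subseteq> M" "\<forall>y\<in>Y. d x y \<le> \<rho>" "separated d r Y"
      and large: "\<not> (finite Y \<and> card Y \<le> N)"
      using unbounded by blast
    obtain Z where Z: "Z \<subseteq> Y" "finite Z" "card Z = N"
    proof (cases "finite Y")
      case True
      then have "N \<le> card Y" using large by simp
      then show ?thesis using obtain_subset_with_card_n that by blast
    next
      case False
      then show ?thesis using infinite_arbitrarily_large that by blast
    qed
    have "Z \<subseteq> M \<and> finite Z \<and> card Z = N \<and> separated d r Z \<and> (\<forall>z\<in>Z. d x z \<le> \<rho>)"
      using Y Z separated_subset by blast
    then show ?thesis using \<open>x \<in> M\<close> by blast
  qed
  then show ?thesis by (rule that)
qed

theorem coarse_entropy_infinite_if_not_coarsely_bounded_geometry: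
  assumes q: "quasigeodesic_with C A M d" and "\<not> coarsely_bounded_geometry M d" "x0 \<in> M"
  shows "coarse_entropy M d x0 = \<infinity>"
proof (rule coarse_entropy_eq_infinity[OF Metric_space_axioms \<open>x0 \<in> M\<close>, of "A + 1" "\<lambda>t. t" 1])
  show "0 \<le> A + 1" "filterlim (\<lambda>t. t) at_top at_top"
    using quasigeodesic_with_consts[OF q] by (auto simp: filterlim_ident)
next
  fix \<delta> R :: real assume "A + 1 \<le> \<delta>" "1 \<le> R"
  obtain \<rho> where large: "\<And>N. \<exists>x\<in>M. \<exists>Z\<subseteq>M. finite Z \<and> card Z = N \<and> separated d R Z \<and> (\<forall>z\<in>Z. d x z \<le> \<rho>)"
    using large_separated_sets_if_not_coarsely_bounded_geometry[OF assms(2), of R] \<open>1 \<le> R\<close> by auto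
  define L where "L = real (2 * (nat \<lceil>\<rho> / ((\<delta> - A) / C)\<rceil> + 1))"
  have "ereal B \<le> scale_entropy M d \<delta> R x0" for B
  proof -
    define N where "N = nat \<lceil>exp (\<bar>B\<bar> * L)\<rceil> + 1"
    obtain x Z where Z: "x \<in> M" "Z \<subseteq> M" "finite Z" "card Z = N" "separated d R Z" "\<forall>z\<in>Z. d x z \<le> \<rho>"
      using large by blast
    moreover have "Z \<noteq> {}" using \<open>card Z = N\<close> unfolding N_def by auto
    moreover have "A < \<delta>" using \<open>A + 1 \<le> \<delta>\<close> by simp
    ultimately have "ereal (ln (real N) / L) \<le> scale_entropy M d \<delta> R x0"
      using ln_card_le_scale_entropy[OF q \<open>x0 \<in> M\<close> Z(1) _ Z(3,2) _ Z(5), of \<delta> \<rho>] Z(6)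
      unfolding L_def by auto
    moreover have "B \<le> ln (real N) / L"
    proof -
      have "exp (\<bar>B\<bar> * L) \<le> real N" unfolding N_def by linarith
      moreover have "N \<ge> 1" unfolding N_def by simp
      ultimately have "\<bar>B\<bar> * L \<le> ln (real N)" by (simp add: ln_ge_iff)
      moreover have "L > 0" unfolding L_def by simp
      then have "B * L \<le> \<bar>B\<bar> * L" by (intro mult_right_mono) auto
      ultimately have "B * L \<le> ln (real N)" by linarith
      then show ?thesis using \<open>L > 0\<close> by (simp add: pos_le_divide_eq)
    qed
    ultimately show ?thesis by (meson ereal_less_eq(3) order.trans)
  qed
  then have "scale_entropy M d \<delta> R x0 = \<infinity>" by (rule ereal_top)
  then show "ereal \<delta> \<le> scale_entropy M d \<delta> R x0" by simp
qed

end

section \<open>Walks in graphs\<close>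

definition walk_dist :: "nat set \<Rightarrow> (nat \<Rightarrow> nat \<Rightarrow> bool) \<Rightarrow> nat \<Rightarrow> nat \<Rightarrow> nat" where
  "walk_dist V E u v = (LEAST n. gwalk V E u v n)"

lemma gdist_eq_walk_dist: "gdist V E u v = real (walk_dist V E u v)"
  unfolding gdist_def walk_dist_def ..

lemma gwalk_refl: "u \<in> V \<Longrightarrow> gwalk V E u u 0"
  unfolding gwalk_def by (intro exI[of _ "\<lambda>_. u"]) auto

lemma gwalk_edge: "simple_graph V E \<Longrightarrow> E u v \<Longrightarrow> gwalk V E u v 1"
  unfolding gwalk_def simple_graph_def
  by (intro exI[of _ "\<lambda>i. if i = 0 then u else v"]) (auto simp: le_Suc_eq)

lemma gwalk_append:
  assumes "gwalk V E u v m" "gwalk V E v w n"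
  shows "gwalk V E u w (m + n)"
proof -
  obtain p where p: "p 0 = u" "p m = v" "\<forall>i\<le>m. p i \<in> V" "\<forall>i<m. E (p i) (p (Suc i))"
    using assms(1) unfolding gwalk_def by blast
  obtain q where q: "q 0 = v" "q n = w" "\<forall>i\<le>n. q i \<in> V" "\<forall>i<n. E (q i) (q (Suc i))"
    using assms(2) unfolding gwalk_def by blast
  define r where "r i = (if i \<le> m then p i else q (i - m))" for i
  have "E (r i) (r (Suc i))" if "i < m + n" for i
  proof -
    consider "Suc i \<le> m" | "i = m" | "i > m" by linarith
    then show ?thesis
    proof cases
      case 3
      then have "Suc i - m = Suc (i - m)" by auto
      then show ?thesis unfolding r_def using 3 q that by auto
    qed (use p q that in \<open>auto simp: r_def\<close>)
  qed
  moreover have "r 0 = u" "r (m + n) = w" "\<forall>i\<le>m+n. r i \<in> V" unfolding r_def using p q by auto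
  ultimately show ?thesis unfolding gwalk_def by blast
qed

lemma gwalk_rev:
  assumes "simple_graph V E" "gwalk V E u v n"
  shows "gwalk V E v u n"
proof -
  obtain p where p: "p 0 = u" "p n = v" "\<forall>i\<le>n. p i \<in> V" "\<forall>i<n. E (p i) (p (Suc i))"
    using assms(2) unfolding gwalk_def by blast
  have "E (p (n - i)) (p (n - Suc i))" if "i < n" for i
  proof -
    have "E (p (n - Suc i)) (p (Suc (n - Suc i)))" using p(4) that by simp
    then have "E (p (Suc (n - Suc i))) (p (n - Suc i))"
      using assms(1) unfolding simple_graph_def by blast
    moreover have "Suc (n - Suc i) = n - i" using that by auto
    ultimately show ?thesis by simp
  qed
  then show ?thesis unfolding gwalk_def using p by (intro exI[of _ "\<lambda>i. p (n - i)"]) auto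
qed

lemma gwalk_lazy:
  assumes "simple_graph V E" "\<forall>i\<le>n. p i \<in> V" "\<forall>i<n. p i = p (Suc i) \<or> E (p i) (p (Suc i))"
  shows "\<exists>m\<le>n. gwalk V E (p 0) (p n) m"
  using assms(2,3)
proof (induction n)
  case 0 then show ?case using gwalk_refl[of "p 0" V E] by auto
next
  case (Suc n)
  then obtain m where m: "m \<le> n" "gwalk V E (p 0) (p n) m" by auto
  show ?case
  proof (cases "p n = p (Suc n)")
    case True then show ?thesis using m by (intro exI[of _ m]) auto
  next
    case False
    then have "E (p n) (p (Suc n))" using Suc.prems by auto
    then have "gwalk V E (p 0) (p (Suc n)) (m + 1)"
      using gwalk_append[OF m(2) gwalk_edge[OF assms(1)]] by simp
    then show ?thesis using m by (intro exI[of _ "m + 1"]) auto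
  qed
qed

lemma walk_dist_le: "gwalk V E u v n \<Longrightarrow> walk_dist V E u v \<le> n"
  unfolding walk_dist_def by (rule Least_le)

lemma gwalk_walk_dist: "gwalk V E u v n \<Longrightarrow> gwalk V E u v (walk_dist V E u v)"
  unfolding walk_dist_def by (rule LeastI)

lemma walk_dist_refl: "u \<in> V \<Longrightarrow> walk_dist V E u u = 0"
  using walk_dist_le[OF gwalk_refl] by auto

lemma walk_dist_triangle:
  assumes "graph_connected V E" "u \<in> V" "v \<in> V" "w \<in> V"
  shows "walk_dist V E u w \<le> walk_dist V E u v + walk_dist V E v w"
proof -
  obtain a b where "gwalk V E u v a" "gwalk V E v w b"
    using assms unfolding graph_connected_def by blast
  then show ?thesis by (intro walk_dist_le gwalk_append[OF gwalk_walk_dist gwalk_walk_dist])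
qed

lemma walk_dist_sym:
  assumes "simple_graph V E" "graph_connected V E" "u \<in> V" "v \<in> V"
  shows "walk_dist V E u v = walk_dist V E v u"
proof -
  have le: "walk_dist V E a b \<le> walk_dist V E b a" if ab: "a \<in> V" "b \<in> V" for a b
  proof -
    obtain k where "gwalk V E b a k" using assms(2) ab unfolding graph_connected_def by blast
    then show ?thesis by (intro walk_dist_le gwalk_rev[OF assms(1) gwalk_walk_dist])
  qed
  show ?thesis using assms(3,4) by (intro antisym le)
qed

lemma card_ball_chains_le:
  assumes "v0 \<in> V" and B: "\<And>v. v \<in> V \<Longrightarrow> B v \<subseteq> V \<and> finite (B v) \<and> real (card (B v)) \<le> G"
  shows "finite {s \<in> {0..J} \<rightarrow>\<^sub>E V. s 0 = v0 \<and> (\<forall>j<J. s (Suc j) \<in> B (s j))} \<and>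
         real (card {s \<in> {0..J} \<rightarrow>\<^sub>E V. s 0 = v0 \<and> (\<forall>j<J. s (Suc j) \<in> B (s j))}) \<le> G ^ J"
proof (induction J)
  case 0
  have "{s \<in> {0..0::nat} \<rightarrow>\<^sub>E V. s 0 = v0 \<and> (\<forall>j<0. s (Suc j) \<in> B (s j))} = {(\<lambda>i\<in>{0..0::nat}. v0)}"
    using \<open>v0 \<in> V\<close> by (auto simp: PiE_def extensional_def fun_eq_iff)
  then show ?case by simp
next
  case (Suc J)
  define S where "S J = {s \<in> {0..J} \<rightarrow>\<^sub>E V. s 0 = v0 \<and> (\<forall>j<J. s (Suc j) \<in> B (s j))}" for J
  have IH: "finite (S J)" "real (card (S J)) \<le> G ^ J" using Suc unfolding S_def by auto
  have sJ: "s J \<in> V" if "s \<in> S J" for s using that unfolding S_def by auto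
  define \<Sigma> where "\<Sigma> = (SIGMA s:S J. B (s J))"
  have "S (Suc J) \<subseteq> (\<lambda>(s, w). s(Suc J := w)) ` \<Sigma>"
  proof
    fix t assume t: "t \<in> S (Suc J)"
    define s where "s = restrict t {0..J}"
    have "s \<in> S J" "t (Suc J) \<in> B (s J)" using t unfolding S_def s_def by (auto simp: PiE_def)
    moreover have "t = s(Suc J := t (Suc J))"
      using t unfolding S_def s_def by (auto simp: fun_eq_iff PiE_def extensional_def le_Suc_eq)
    ultimately show "t \<in> (\<lambda>(s, w). s(Suc J := w)) ` \<Sigma>" unfolding \<Sigma>_def
      by (intro image_eqI[of _ _ "(s, t (Suc J))"]) auto
  qed
  moreover have "finite \<Sigma>" unfolding \<Sigma>_def using IH B sJ by (intro finite_SigmaI) auto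
  moreover have "real (card \<Sigma>) \<le> G ^ Suc J"
  proof -
    have "real (card \<Sigma>) = (\<Sum>s\<in>S J. real (card (B (s J))))"
      unfolding \<Sigma>_def using IH B sJ by (subst card_SigmaI) auto
    also have "\<dots> \<le> real (card (S J)) * G" using B sJ sum_mono[of "S J" _ "\<lambda>_. G"] by simp
    also have "\<dots> \<le> G ^ J * G"
      using IH B \<open>v0 \<in> V\<close> by (intro mult_right_mono) (auto intro: order.trans[OF of_nat_0_le_iff])
    finally show ?thesis by (simp add: algebra_simps)
  qed
  ultimately show ?case
    unfolding S_def by (meson card_image_le card_mono finite_imageI finite_subset of_nat_le_iff order.trans)
qed

section \<open>The graph of a space of bounded geometry\<close>

text \<open>X is coarsely equivalent, via F with control functions \<rho>m and \<rho>p, to a space T of bounded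
  geometry; joining points of T at distance at most link_radius gives the graph of part (b).\<close>
locale coarse_graph = Metric_space X d + T: Metric_space T e
  for X :: "'a set" and d and T :: "nat set" and e +
  fixes F :: "'a \<Rightarrow> nat" and \<rho>m \<rho>p :: "real \<Rightarrow> real" and R0 C A :: real
  assumes nonempty: "X \<noteq> {}" and quasigeodesic: "quasigeodesic_with C A X d"
    and bounded_geometry: "bounded_geometry T e"
    and F_into: "F ` X \<subseteq> T" and mono_\<rho>p: "mono \<rho>p" and \<rho>m_at_top: "filterlim \<rho>m at_top at_top"
    and F_bounds: "\<And>x x'. x \<in> X \<Longrightarrow> x' \<in> X \<Longrightarrow> \<rho>m (d x x') \<le> e (F x) (F x') \<and> e (F x) (F x') \<le> \<rho>p (d x x')"
    and F_dense: "\<And>y. y \<in> T \<Longrightarrow> \<exists>x\<in>X. e y (F x) \<le> R0"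
begin

definition link_radius :: real where
  "link_radius = max 1 (max (\<rho>p (C + A)) R0)"

definition adj :: "nat \<Rightarrow> nat \<Rightarrow> bool" where
  "adj u v \<longleftrightarrow> u \<in> T \<and> v \<in> T \<and> u \<noteq> v \<and> e u v \<le> link_radius"

definition lift :: "nat \<Rightarrow> 'a" where
  "lift v = (SOME x. x \<in> X \<and> e v (F x) \<le> R0)"

definition K :: real where
  "K = (SOME K. K \<ge> 1 \<and> (\<forall>x\<in>X. \<forall>x'\<in>X. e (F x) (F x') \<le> 3 * link_radius \<longrightarrow> d x x' \<le> K))"

lemma link_radius: "1 \<le> link_radius" "R0 \<le> link_radius" "\<rho>p (C + A) \<le> link_radius"
  unfolding link_radius_def by auto

lemma F_in: "x \<in> X \<Longrightarrow> F x \<in> T"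
  using F_into by blast

lemma simple_graph_adj: "simple_graph T adj"
  unfolding simple_graph_def adj_def using T.commute by auto

lemma adj_if_close: "u \<in> T \<Longrightarrow> v \<in> T \<Longrightarrow> e u v \<le> link_radius \<Longrightarrow> u = v \<or> adj u v"
  unfolding adj_def by auto

lemma lift: "v \<in> T \<Longrightarrow> lift v \<in> X \<and> e v (F (lift v)) \<le> R0"
  unfolding lift_def using F_dense by (rule someI2_bex) auto

lemma K: "1 \<le> K" "x \<in> X \<Longrightarrow> x' \<in> X \<Longrightarrow> e (F x) (F x') \<le> 3 * link_radius \<Longrightarrow> d x x' \<le> K"
proof -
  obtain s0 where s0: "\<And>s. s \<ge> s0 \<Longrightarrow> \<rho>m s > 3 * link_radius"
    using \<rho>m_at_top by (auto simp: filterlim_at_top_dense eventually_at_top_linorder)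
  have "d x x' \<le> max 1 s0" if "x \<in> X" "x' \<in> X" "e (F x) (F x') \<le> 3 * link_radius" for x x'
  proof (rule ccontr)
    assume "\<not> d x x' \<le> max 1 s0"
    then have "\<rho>m (d x x') > 3 * link_radius" using s0 by simp
    then show False using F_bounds[OF that(1,2)] that(3) by linarith
  qed
  then have "\<exists>K. K \<ge> 1 \<and> (\<forall>x\<in>X. \<forall>x'\<in>X. e (F x) (F x') \<le> 3 * link_radius \<longrightarrow> d x x' \<le> K)"
    by (intro exI[of _ "max 1 s0"]) auto
  then have "K \<ge> 1 \<and> (\<forall>x\<in>X. \<forall>x'\<in>X. e (F x) (F x') \<le> 3 * link_radius \<longrightarrow> d x x' \<le> K)"
    unfolding K_def by (rule someI_ex)
  then show "1 \<le> K" "x \<in> X \<Longrightarrow> x' \<in> X \<Longrightarrow> e (F x) (F x') \<le> 3 * link_radius \<Longrightarrow> d x x' \<le> K"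
    by auto
qed

lemma e_le_walk_length:
  assumes "gwalk T adj u v n"
  shows "e u v \<le> real n * link_radius"
proof -
  obtain p where p: "p 0 = u" "p n = v" "\<forall>i\<le>n. p i \<in> T" "\<forall>i<n. adj (p i) (p (Suc i))"
    using assms unfolding gwalk_def by blast
  have "e u (p j) \<le> real j * link_radius" if "j \<le> n" for j
    using that
  proof (induction j)
    case 0
    have "u \<in> T" using p by auto
    then show ?case using p by simp
  next
    case (Suc j)
    have "e u (p (Suc j)) \<le> e u (p j) + e (p j) (p (Suc j))"
      using p Suc.prems by (intro T.triangle) auto
    also have "\<dots> \<le> real j * link_radius + link_radius"
      using Suc p unfolding adj_def by (intro add_mono) auto
    finally show ?case by (simp add: algebra_simps)
  qed
  then show ?thesis using p by auto
qed

text \<open>Each vertex of the walk is lifted to X; consecutive lifts are at distance at most K.\<close>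
lemma d_le_walk_length:
  assumes "x \<in> X" "x' \<in> X" "gwalk T adj (F x) (F x') n"
  shows "d x x' \<le> K * (real n + 1)"
proof -
  obtain p where p: "p 0 = F x" "p n = F x'" "\<forall>i\<le>n. p i \<in> T" "\<forall>i<n. adj (p i) (p (Suc i))"
    using assms(3) unfolding gwalk_def by blast
  define xs where "xs j = (if j = n then x' else lift (p j))" for j
  have xs: "xs j \<in> X \<and> e (p j) (F (xs j)) \<le> link_radius" if "j \<le> n" for j
    using lift[of "p j"] p that assms(2) link_radius unfolding xs_def by auto
  have step: "d (xs j) (xs (Suc j)) \<le> K" if "j < n" for j
  proof -
    have in_X: "xs j \<in> X" "xs (Suc j) \<in> X" using xs that by auto
    have "e (F (xs j)) (F (xs (Suc j))) \<le> e (F (xs j)) (p j) + e (p j) (F (xs (Suc j)))"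
      using in_X p that F_in by (intro T.triangle) auto
    also have "\<dots> \<le> e (F (xs j)) (p j) + (e (p j) (p (Suc j)) + e (p (Suc j)) (F (xs (Suc j))))"
      using in_X p that F_in by (intro add_left_mono T.triangle) auto
    also have "\<dots> \<le> 3 * link_radius"
      using xs[of j] xs[of "Suc j"] p that T.commute[of "F (xs j)" "p j"] unfolding adj_def by auto
    finally show ?thesis using K(2)[OF in_X] by simp
  qed
  have tel: "d (xs 0) (xs j) \<le> K * real j" if "j \<le> n" for j
    using that
  proof (induction j)
    case 0 then show ?case using xs[of 0] by simp
  next
    case (Suc j)
    have "d (xs 0) (xs (Suc j)) \<le> d (xs 0) (xs j) + d (xs j) (xs (Suc j))"
      using xs Suc.prems by (intro triangle) auto
    also have "\<dots> \<le> K * real j + K" using Suc step by (intro add_mono) auto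
    finally show ?case by (simp add: algebra_simps)
  qed
  have "d x (xs 0) \<le> K"
    using xs[of 0] p(1) assms(1) link_radius by (intro K(2)) auto
  moreover have "d x x' \<le> d x (xs 0) + d (xs 0) (xs n)"
    using assms(1) xs[of 0] xs[of n] triangle[of x "xs 0" "xs n"] unfolding xs_def by simp
  ultimately show ?thesis using tel[of n] by (simp add: algebra_simps)
qed

text \<open>Consecutive unit-spaced samples of a quasigeodesic are at distance at most C + A, so
  their images are equal or adjacent.\<close>
lemma gwalk_F_le_dist:
  assumes "x \<in> X" "x' \<in> X"
  obtains m where "real m \<le> d x x' + 1" "gwalk T adj (F x) (F x') m"
proof -
  obtain p where p0: "p 0 = x" and p1: "p (d x x') = x'" and pX: "\<And>s. s \<in> {0..d x x'} \<Longrightarrow> p s \<in> X"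
    and pd: "\<And>s t. s \<in> {0..d x x'} \<Longrightarrow> t \<in> {0..d x x'} \<Longrightarrow> d (p s) (p t) \<le> C * \<bar>s - t\<bar> + A"
    using quasigeodesic_pathE[OF quasigeodesic assms] by blast
  have C: "C \<ge> 1" using quasigeodesic_with_consts[OF quasigeodesic] by simp
  define n where "n = nat \<lceil>d x x'\<rceil>"
  define w where "w j = F (p (min (real j) (d x x')))" for j :: nat
  have wT: "\<forall>i\<le>n. w i \<in> T" unfolding w_def using pX F_in by auto
  have "w i = w (Suc i) \<or> adj (w i) (w (Suc i))" if "i < n" for i
  proof -
    let ?s = "min (real i) (d x x')" and ?t = "min (real (Suc i)) (d x x')"
    have "\<bar>?s - ?t\<bar> \<le> 1" by (auto simp: min_def)
    then have "C * \<bar>?s - ?t\<bar> \<le> C * 1" using C by (intro mult_left_mono) auto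
    moreover have "d (p ?s) (p ?t) \<le> C * \<bar>?s - ?t\<bar> + A" by (intro pd) auto
    ultimately have "d (p ?s) (p ?t) \<le> C + A" by simp
    then have "\<rho>p (d (p ?s) (p ?t)) \<le> link_radius"
      using mono_\<rho>p link_radius(3) by (meson monoD order.trans)
    moreover have "p ?s \<in> X" "p ?t \<in> X" by (intro pX; simp)+
    ultimately have "e (w i) (w (Suc i)) \<le> link_radius"
      unfolding w_def using F_bounds by (meson order.trans)
    then show ?thesis using adj_if_close wT that by auto
  qed
  then obtain m where m: "m \<le> n" "gwalk T adj (w 0) (w n) m"
    using gwalk_lazy[OF simple_graph_adj, of n w] wT by auto
  moreover have "w 0 = F x" unfolding w_def using p0 by simp
  moreover have "w n = F x'"
  proof -
    have "min (real n) (d x x') = d x x'" unfolding n_def by linarith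
    then show ?thesis unfolding w_def using p1 by simp
  qed
  moreover have "real m \<le> d x x' + 1"
  proof -
    have "real n \<le> d x x' + 1" unfolding n_def using nonneg[of x x'] by linarith
    then show ?thesis using m(1) by linarith
  qed
  ultimately show ?thesis using that by auto
qed

lemma gwalk_to_lift: "v \<in> T \<Longrightarrow> \<exists>k\<le>1. gwalk T adj v (F (lift v)) k"
proof -
  assume v: "v \<in> T"
  then have "v = F (lift v) \<or> adj v (F (lift v))"
    using lift[OF v] link_radius(2) F_in by (intro adj_if_close) auto
  then show ?thesis using gwalk_refl[OF v, of adj] gwalk_edge[OF simple_graph_adj] by force
qed

lemma graph_connected_adj: "graph_connected T adj"
  unfolding graph_connected_def
proof (intro conjI ballI)
  show "T \<noteq> {}" using nonempty F_in by blast
  fix u v assume "u \<in> T" "v \<in> T"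
  obtain k1 k2 m where "gwalk T adj u (F (lift u)) k1" "gwalk T adj v (F (lift v)) k2"
    "gwalk T adj (F (lift u)) (F (lift v)) m"
    using gwalk_to_lift[OF \<open>u \<in> T\<close>] gwalk_to_lift[OF \<open>v \<in> T\<close>] gwalk_F_le_dist lift \<open>u \<in> T\<close> \<open>v \<in> T\<close>
    by metis
  then show "\<exists>n. gwalk T adj u v n"
    using gwalk_append gwalk_rev[OF simple_graph_adj] by metis
qed

lemma walk_dist_lift_le:
  assumes "v \<in> T"
  shows "walk_dist T adj v (F (lift v)) \<le> 1" "walk_dist T adj (F (lift v)) v \<le> 1"
proof -
  show "walk_dist T adj v (F (lift v)) \<le> 1"
    using gwalk_to_lift[OF assms] walk_dist_le order.trans by blast
  then show "walk_dist T adj (F (lift v)) v \<le> 1"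
    using walk_dist_sym[OF simple_graph_adj graph_connected_adj] assms lift F_in by metis
qed

lemma walk_dist_F_le:
  assumes "x \<in> X" "x' \<in> X"
  shows "real (walk_dist T adj (F x) (F x')) \<le> d x x' + 1"
proof -
  obtain m where "real m \<le> d x x' + 1" "gwalk T adj (F x) (F x') m"
    using gwalk_F_le_dist[OF assms] by blast
  then show ?thesis using walk_dist_le[of T adj "F x" "F x'" m] by linarith
qed

lemma dist_le_walk_dist_F:
  assumes "x \<in> X" "x' \<in> X"
  shows "d x x' \<le> K * (real (walk_dist T adj (F x) (F x')) + 1)"
proof -
  obtain m where "gwalk T adj (F x) (F x') m"
    using gwalk_F_le_dist[OF assms] by blast
  then show ?thesis using d_le_walk_length[OF assms gwalk_walk_dist] by blast
qed

lemma bounded_degree_adj: "bounded_degree T adj"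
proof -
  obtain N where N: "\<forall>u\<in>T. finite {v\<in>T. e u v \<le> link_radius} \<and> card {v\<in>T. e u v \<le> link_radius} \<le> N"
    using bounded_geometry link_radius(1) unfolding bounded_geometry_def by fastforce
  have "{w\<in>T. adj v w} \<subseteq> {y\<in>T. e v y \<le> link_radius}" for v unfolding adj_def by auto
  then show ?thesis
    unfolding bounded_degree_def using N by (meson card_mono finite_subset order.trans)
qed

lemma quasi_isometric_adj: "quasi_isometric X d T (gdist T adj)"
  unfolding quasi_isometric_def quasi_isometry_def gdist_eq_walk_dist
proof (intro exI conjI ballI)
  show "1 \<le> K" "(0::real) \<le> 1" "F ` X \<subseteq> T" using K(1) F_into by auto
next
  fix x x' assume x: "x \<in> X" "x' \<in> X"
  have "1 * d x x' \<le> K * d x x'" using K(1) by (intro mult_right_mono) auto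
  then show "real (walk_dist T adj (F x) (F x')) \<le> K * d x x' + 1"
    using walk_dist_F_le[OF x] by linarith
  have "d x x' / K \<le> real (walk_dist T adj (F x) (F x')) + 1"
    using dist_le_walk_dist_F[OF x] K(1) by (simp add: divide_le_eq mult.commute)
  then show "d x x' / K - 1 \<le> real (walk_dist T adj (F x) (F x'))" by linarith
next
  fix v assume "v \<in> T"
  then show "\<exists>x\<in>X. real (walk_dist T adj v (F x)) \<le> 1"
    using walk_dist_lift_le(1) lift by (intro bexI[of _ "lift v"]) auto
qed

lemma e_le_of_mem_gball:
  assumes "v \<in> T" "w \<in> gball T adj v (real l)"
  shows "e v w \<le> real l * link_radius"
proof -
  have "w \<in> T" "walk_dist T adj v w \<le> l"
    using assms(2) unfolding gball_def gdist_eq_walk_dist by auto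
  obtain k where "gwalk T adj v w k"
    using graph_connected_adj assms(1) \<open>w \<in> T\<close> unfolding graph_connected_def by blast
  then have "e v w \<le> real (walk_dist T adj v w) * link_radius"
    by (intro e_le_walk_length gwalk_walk_dist)
  also have "\<dots> \<le> real l * link_radius"
    using \<open>walk_dist T adj v w \<le> l\<close> link_radius(1) by (intro mult_right_mono) auto
  finally show ?thesis .
qed

lemma gball_card_bounded: "\<exists>N::nat. \<forall>v\<in>T. finite (gball T adj v (real l)) \<and> card (gball T adj v (real l)) \<le> N"
proof -
  have "real l * link_radius + 1 > 0" using link_radius(1) by (simp add: add_nonneg_pos)
  then obtain N where N: "\<forall>u\<in>T. finite {w\<in>T. e u w \<le> real l * link_radius + 1} \<and>
      card {w\<in>T. e u w \<le> real l * link_radius + 1} \<le> N"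
    using bounded_geometry unfolding bounded_geometry_def by blast
  have "gball T adj v (real l) \<subseteq> {w\<in>T. e v w \<le> real l * link_radius + 1}" if "v \<in> T" for v
    using e_le_of_mem_gball[OF that] unfolding gball_def by fastforce
  then show ?thesis using N by (meson card_mono finite_subset order.trans)
qed

lemma finite_gball: "v \<in> T \<Longrightarrow> finite (gball T adj v (real l))"
  using gball_card_bounded by blast

lemma bdd_above_card_gball: "bdd_above ((\<lambda>v. real (card (gball T adj v (real l)))) ` T)"
proof -
  obtain N :: nat where "\<forall>v\<in>T. card (gball T adj v (real l)) \<le> N"
    using gball_card_bounded by blast
  then show ?thesis by (intro bdd_aboveI[of _ "real N"]) auto
qed

lemma card_gball_le_growth: "v \<in> T \<Longrightarrow> real (card (gball T adj v (real l))) \<le> growth T adj l"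
  unfolding growth_def using bdd_above_card_gball by (rule cSUP_upper2) auto

lemma one_le_growth: "1 \<le> growth T adj l"
proof -
  obtain v where "v \<in> T" using nonempty F_in by blast
  then have "v \<in> gball T adj v (real l)"
    unfolding gball_def gdist_eq_walk_dist by (simp add: walk_dist_refl)
  then have "1 \<le> card (gball T adj v (real l))"
    using finite_gball[OF \<open>v \<in> T\<close>] by (auto simp: Suc_le_eq card_gt_0_iff)
  then show ?thesis using card_gball_le_growth[OF \<open>v \<in> T\<close>, of l] by linarith
qed

lemma large_gball: "\<exists>v\<in>T. growth T adj l / 2 < real (card (gball T adj v (real l)))"
proof -
  have "growth T adj l / 2 < growth T adj l" using one_le_growth[of l] by simp
  moreover have "T \<noteq> {}" using nonempty F_in by blast
  ultimately show ?thesis unfolding growth_def using less_cSUP_iff[OF _ bdd_above_card_gball] by blast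
qed

lemma path_dist_le_if_samples_agree:
  assumes p: "p \<in> delta_paths X d n \<delta> x0" and q: "q \<in> delta_paths X d n \<delta> x0" and "k \<ge> 1" "\<delta> \<ge> 0"
    and same: "\<And>j. j * k \<le> n \<Longrightarrow> F (p (j * k)) = F (q (j * k))"
  shows "path_dist d n p q \<le> 2 * real k * \<delta> + K"
  unfolding path_dist_def
proof (rule Max.boundedI, simp, simp, clarify)
  fix t assume "t \<in> {0..n}"
  define s where "s = t div k * k"
  have "s \<le> t" "t - s \<le> k" "t \<le> n"
    using \<open>t \<in> {0..n}\<close> \<open>k \<ge> 1\<close> unfolding s_def
    by (auto simp: minus_div_mult_eq_mod intro: less_imp_le)
  have in_X: "p i \<in> X" "q i \<in> X" if "i \<le> n" for i
    using p q that unfolding delta_paths_def by auto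
  have "d (p s) (q s) \<le> K"
    using dist_le_walk_dist_F[of "p s" "q s"] same[of "t div k"] in_X \<open>s \<le> t\<close> \<open>t \<le> n\<close>
      walk_dist_refl F_in unfolding s_def by auto
  moreover have "d (p s) (p t) \<le> real k * \<delta>" "d (q s) (q t) \<le> real k * \<delta>"
    using p q \<open>s \<le> t\<close> \<open>t \<le> n\<close> \<open>t - s \<le> k\<close> \<open>\<delta> \<ge> 0\<close> by (auto intro: delta_path_dist_le_mult)
  moreover have "d (p t) (q t) \<le> d (p s) (p t) + d (p s) (q s) + d (q s) (q t)"
    using triangle[of "p t" "p s" "q t"] triangle[of "p s" "q s" "q t"] commute[of "p t" "p s"]
      in_X \<open>s \<le> t\<close> \<open>t \<le> n\<close> by auto
  ultimately show "d (p t) (q t) \<le> 2 * real k * \<delta> + K" by linarith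
qed

lemma samples_in_ball_chains:
  fixes k :: nat
  assumes p: "p \<in> delta_paths X d n \<delta> x0" and "\<delta> \<ge> 0"
  defines "l \<equiv> nat \<lceil>real k * \<delta>\<rceil> + 1"
  shows "(\<lambda>j\<in>{0..J}. F (p (min (j * k) n)))
    \<in> {s \<in> {0..J} \<rightarrow>\<^sub>E T. s 0 = F x0 \<and> (\<forall>j<J. s (Suc j) \<in> gball T adj (s j) (real l))}"
proof -
  have in_X: "p i \<in> X" if "i \<le> n" for i
    using p that unfolding delta_paths_def by (auto simp: PiE_iff)
  have "F (p b) \<in> gball T adj (F (p a)) (real l)" if "a = min (j * k) n" "b = min (Suc j * k) n" for j a b
  proof -
    have "a \<le> b" "b \<le> n" "b - a \<le> k" using that by (auto simp: min_def)
    then have "d (p a) (p b) \<le> real k * \<delta>"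
      using delta_path_dist_le_mult[OF p _ _ _ \<open>\<delta> \<ge> 0\<close>] by blast
    moreover have "real (walk_dist T adj (F (p a)) (F (p b))) \<le> d (p a) (p b) + 1"
      using in_X \<open>a \<le> b\<close> \<open>b \<le> n\<close> by (intro walk_dist_F_le) auto
    ultimately have "walk_dist T adj (F (p a)) (F (p b)) \<le> l"
      unfolding l_def by linarith
    then show ?thesis
      using in_X \<open>b \<le> n\<close> F_in unfolding gball_def gdist_eq_walk_dist by auto
  qed
  moreover have "p 0 = x0" using p unfolding delta_paths_def by auto
  ultimately show ?thesis using in_X F_in by auto
qed

text \<open>A separated family of delta-paths is injectively encoded by the images of its samples
  taken every k steps.\<close>
lemma separated_count_le_growth_power:
  assumes "x0 \<in> X" "\<delta> \<ge> 0" "k \<ge> 1" "2 * real k * \<delta> + K \<le> R"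
  shows "separated_count X d n R \<delta> x0 \<le> ereal (growth T adj (nat \<lceil>real k * \<delta>\<rceil> + 1) ^ (n div k + 1))"
proof (rule separated_count_le)
  define l where "l = nat \<lceil>real k * \<delta>\<rceil> + 1"
  define J where "J = n div k + 1"
  define S where "S = {s \<in> {0..J} \<rightarrow>\<^sub>E T. s 0 = F x0 \<and> (\<forall>j<J. s (Suc j) \<in> gball T adj (s j) (real l))}"
  have S: "finite S" "real (card S) \<le> growth T adj l ^ J"
    using card_ball_chains_le[OF F_in[OF \<open>x0 \<in> X\<close>], of "\<lambda>v. gball T adj v (real l)" "growth T adj l" J]
      finite_gball card_gball_le_growth unfolding S_def gball_def by auto
  fix P assume P: "P \<subseteq> delta_paths X d n \<delta> x0" "finite P" "separated (path_dist d n) R P"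
  define sample where "sample p = (\<lambda>j\<in>{0..J}. F (p (min (j * k) n)))" for p :: "nat \<Rightarrow> 'a"
  have "sample ` P \<subseteq> S"
  proof (rule image_subsetI)
    fix p assume "p \<in> P"
    then have "p \<in> delta_paths X d n \<delta> x0" using P(1) by blast
    then show "sample p \<in> S"
      unfolding sample_def S_def l_def by (rule samples_in_ball_chains[OF _ \<open>\<delta> \<ge> 0\<close>])
  qed
  moreover have "inj_on sample P"
  proof (rule inj_onI, rule ccontr)
    fix p q assume "p \<in> P" "q \<in> P" "sample p = sample q" "p \<noteq> q"
    have "F (p (j * k)) = F (q (j * k))" if "j * k \<le> n" for j
    proof -
      have "j \<le> n div k" using that \<open>k \<ge> 1\<close> by (metis div_le_mono div_mult_self_is_m not_one_le_zero neq0_conv)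
      then show ?thesis
        using fun_cong[OF \<open>sample p = sample q\<close>, of j] that unfolding sample_def J_def by simp
    qed
    then have "path_dist d n p q \<le> 2 * real k * \<delta> + K"
      using P(1) \<open>p \<in> P\<close> \<open>q \<in> P\<close> \<open>k \<ge> 1\<close> \<open>\<delta> \<ge> 0\<close> by (intro path_dist_le_if_samples_agree) auto
    then show False using P(3) \<open>p \<in> P\<close> \<open>q \<in> P\<close> \<open>p \<noteq> q\<close> assms(4) unfolding separated_def by fastforce
  qed
  ultimately have "card P \<le> card S" using S(1) by (metis card_image card_mono)
  then show "real (card P) \<le> growth T adj (nat \<lceil>real k * \<delta>\<rceil> + 1) ^ (n div k + 1)"
    using S(2) unfolding l_def J_def by (meson of_nat_le_iff order.trans)
qed

lemma scale_entropy_le_ln_growth: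
  assumes "x0 \<in> X" "\<delta> \<ge> 0" "k \<ge> 1" "2 * real k * \<delta> + K \<le> R"
  shows "scale_entropy X d \<delta> R x0 \<le> ereal (ln (growth T adj (nat \<lceil>real k * \<delta>\<rceil> + 1)) / real k)"
  using assms separated_count_le_growth_power one_le_growth
  by (intro scale_entropy_le_ln_div[OF Metric_space_axioms]) auto

lemma scale_entropy_le_growth_rate:
  assumes "x0 \<in> X" "\<delta> \<ge> 1" "k \<ge> 1" "2 * real k * \<delta> + K \<le> R"
  defines "l \<equiv> nat \<lceil>real k * \<delta>\<rceil> + 1"
  shows "scale_entropy X d \<delta> R x0 \<le> ereal ((\<delta> + 2) * (ln (growth T adj l) / real l))"
proof -
  have "real k * \<delta> \<ge> 0" using assms(2) by simp
  then have "real l \<le> real k * \<delta> + 2" unfolding l_def by linarith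
  also have "\<dots> \<le> real k * (\<delta> + 2)" using assms(3) by (simp add: algebra_simps)
  finally have "real l / real k \<le> \<delta> + 2" using assms(3) by (simp add: divide_le_eq mult.commute)
  moreover have "ln (growth T adj l) / real l \<ge> 0" using one_le_growth[of l] by simp
  moreover have "real l > 0" unfolding l_def by simp
  ultimately have "ln (growth T adj l) / real k = (ln (growth T adj l) / real l) * (real l / real k)"
    by simp
  also have "\<dots> \<le> (ln (growth T adj l) / real l) * (\<delta> + 2)"
    using \<open>real l / real k \<le> \<delta> + 2\<close> \<open>ln (growth T adj l) / real l \<ge> 0\<close> by (rule mult_left_mono)
  finally have "ln (growth T adj l) / real k \<le> (\<delta> + 2) * (ln (growth T adj l) / real l)"
    by (simp add: mult.commute)
  then show ?thesis
    using scale_entropy_le_ln_growth[OF assms(1) _ assms(3,4)] assms(2) unfolding l_def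
    by (meson ereal_less_eq(3) order.trans zero_le_one)
qed

text \<open>Taking k proportional to R / \<delta>, the sampling scale l of the upper bound tends to infinity
  with R while the bound stays a multiple of the growth rate at scale l.\<close>
theorem coarse_entropy_eq_zero_if_subexponential:
  assumes subexp: "(\<lambda>l. ln (growth T adj l) / real l) \<longlonglongrightarrow> 0" and "x0 \<in> X"
  shows "coarse_entropy X d x0 = 0"
proof (rule coarse_entropy_eq_zero[of 1])
  fix \<delta> :: real assume "1 \<le> \<delta>"
  define k where "k R = nat \<lfloor>(R - K) / (2 * \<delta>)\<rfloor>" for R
  define l where "l R = nat \<lceil>real (k R) * \<delta>\<rceil> + 1" for R
  define g where "g R = ln (growth T adj (l R)) / real (l R)" for R
  have k_large: "real Z \<le> real (k R)" if "R \<ge> K + 2 * \<delta> * real Z" for R Z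
  proof -
    have "real Z \<le> (R - K) / (2 * \<delta>)" using that \<open>1 \<le> \<delta>\<close> by (simp add: field_simps)
    then have "Z \<le> k R" unfolding k_def by linarith
    then show ?thesis by simp
  qed
  have "filterlim l at_top at_top"
    unfolding filterlim_at_top
  proof
    fix Z :: nat
    have "Z \<le> l R" if "R \<ge> K + 2 * \<delta> * real Z" for R
      using k_large[OF that] mult_left_mono[of 1 \<delta> "real (k R)"] \<open>1 \<le> \<delta>\<close> unfolding l_def by simp linarith
    then show "\<forall>\<^sub>F R in at_top. Z \<le> l R" by (rule eventually_at_top_linorderI)
  qed
  then have "((\<lambda>R. ereal ((\<delta> + 2) * g R)) \<longlongrightarrow> ereal ((\<delta> + 2) * 0)) at_top"
    unfolding g_def by (intro tendsto_ereal tendsto_mult tendsto_const filterlim_compose[OF subexp])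
  then have upper: "((\<lambda>R. ereal ((\<delta> + 2) * g R)) \<longlongrightarrow> 0) at_top"
    by (simp add: zero_ereal_def)
  have below: "\<forall>\<^sub>F R in at_top. scale_entropy X d \<delta> R x0 \<le> ereal ((\<delta> + 2) * g R)"
  proof (rule eventually_at_top_linorderI)
    fix R assume R: "R \<ge> K + 2 * \<delta>"
    have "k R \<ge> 1" using k_large[of 1 R] R by simp
    moreover have "1 \<le> (R - K) / (2 * \<delta>)" using R \<open>1 \<le> \<delta>\<close> by (simp add: field_simps)
    then have "real (k R) \<le> (R - K) / (2 * \<delta>)" unfolding k_def by linarith
    then have "2 * real (k R) * \<delta> + K \<le> R" using \<open>1 \<le> \<delta>\<close> by (simp add: field_simps)
    ultimately show "scale_entropy X d \<delta> R x0 \<le> ereal ((\<delta> + 2) * g R)"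
      using scale_entropy_le_growth_rate[OF \<open>x0 \<in> X\<close> \<open>1 \<le> \<delta>\<close>] unfolding g_def l_def by blast
  qed
  have above: "\<forall>\<^sub>F R in at_top. 0 \<le> scale_entropy X d \<delta> R x0"
    using scale_entropy_nonneg[OF Metric_space_axioms \<open>x0 \<in> X\<close>] \<open>1 \<le> \<delta>\<close> by simp
  show "((\<lambda>R. scale_entropy X d \<delta> R x0) \<longlongrightarrow> 0) at_top"
    by (rule tendsto_sandwich[OF above below tendsto_const upper])
qed

text \<open>A maximal s-separated subset of a ball of radius l covers it by balls of radius s.\<close>
lemma separated_subset_of_large_gballE:
  obtains v Q where "v \<in> T" "Q \<subseteq> gball T adj v (real l)" "finite Q"
    "separated (gdist T adj) (real s) Q" "growth T adj l / 2 < real (card Q) * growth T adj s"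
proof -
  obtain v where "v \<in> T" and large: "growth T adj l / 2 < real (card (gball T adj v (real l)))"
    using large_gball by blast
  define B where "B = gball T adj v (real l)"
  have "finite B" "B \<subseteq> T" unfolding B_def using finite_gball[OF \<open>v \<in> T\<close>] by (auto simp: gball_def)
  then have "gdist T adj u u \<le> real s" if "u \<in> B" for u
    using that by (auto simp: gdist_eq_walk_dist walk_dist_refl)
  then obtain Q where "Q \<subseteq> B" "separated (gdist T adj) (real s) Q"
    and near: "\<And>u. u \<in> B \<Longrightarrow> \<exists>q\<in>Q. gdist T adj u q \<le> real s \<or> gdist T adj q u \<le> real s"
    using maximal_separated_subsetE[of B "gdist T adj" "real s"] by blast
  have "finite Q" using \<open>Q \<subseteq> B\<close> \<open>finite B\<close> by (rule finite_subset)
  have QT: "q \<in> T" if "q \<in> Q" for q using that \<open>Q \<subseteq> B\<close> \<open>B \<subseteq> T\<close> by blast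
  have "B \<subseteq> (\<Union>q\<in>Q. gball T adj q (real s))"
  proof
    fix u assume "u \<in> B"
    then obtain q where "q \<in> Q" "gdist T adj u q \<le> real s \<or> gdist T adj q u \<le> real s"
      using near by blast
    moreover have "gdist T adj u q = gdist T adj q u"
      using QT[OF \<open>q \<in> Q\<close>] \<open>u \<in> B\<close> \<open>B \<subseteq> T\<close> walk_dist_sym[OF simple_graph_adj graph_connected_adj]
      unfolding gdist_eq_walk_dist by auto
    ultimately show "u \<in> (\<Union>q\<in>Q. gball T adj q (real s))"
      using \<open>u \<in> B\<close> \<open>B \<subseteq> T\<close> unfolding gball_def by auto
  qed
  then have "card B \<le> card (\<Union>q\<in>Q. gball T adj q (real s))"
    using \<open>finite Q\<close> QT finite_gball by (intro card_mono finite_UN_I) auto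
  also have "\<dots> \<le> (\<Sum>q\<in>Q. card (gball T adj q (real s)))"
    using \<open>finite Q\<close> by (rule card_UN_le)
  finally have "card B \<le> (\<Sum>q\<in>Q. card (gball T adj q (real s)))" .
  then have "real (card B) \<le> (\<Sum>q\<in>Q. real (card (gball T adj q (real s))))"
    by (metis of_nat_le_iff of_nat_sum)
  also have "\<dots> \<le> real (card Q) * growth T adj s"
    using sum_mono[of Q _ "\<lambda>_. growth T adj s"] card_gball_le_growth QT by simp
  finally have "growth T adj l / 2 < real (card Q) * growth T adj s"
    using large unfolding B_def by linarith
  then show ?thesis
    using that \<open>v \<in> T\<close> \<open>Q \<subseteq> B\<close> \<open>finite Q\<close> \<open>separated (gdist T adj) (real s) Q\<close>
    unfolding B_def by blast
qed

text \<open>Lifting to X preserves separation up to the additive error 3 of the graph metric.\<close>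
lemma lift_separated_subset_of_gball:
  assumes "v \<in> T" "Q \<subseteq> gball T adj v (real l)" "separated (gdist T adj) (real s) Q"
    "0 \<le> R" "R + 3 \<le> real s"
  shows "inj_on lift Q" "lift ` Q \<subseteq> X" "separated d R (lift ` Q)"
    "\<And>z. z \<in> lift ` Q \<Longrightarrow> d (lift v) z \<le> K * (real l + 3)"
proof -
  have QT: "q \<in> T" if "q \<in> Q" for q using that assms(2) unfolding gball_def by blast
  have tri: "walk_dist T adj u w \<le> walk_dist T adj u v' + walk_dist T adj v' w"
    if "u \<in> T" "v' \<in> T" "w \<in> T" for u v' w
    using walk_dist_triangle[OF graph_connected_adj that] .
  have far: "R < d (lift q) (lift q')" if "q \<in> Q" "q' \<in> Q" "q \<noteq> q'" for q q'
  proof -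
    have "real s < real (walk_dist T adj q q')"
      using assms(3) that unfolding separated_def gdist_eq_walk_dist by blast
    also have "\<dots> \<le> real (walk_dist T adj q (F (lift q))) + real (walk_dist T adj (F (lift q)) (F (lift q')))
        + real (walk_dist T adj (F (lift q')) q')"
      using tri[of q "F (lift q)" q'] tri[of "F (lift q)" "F (lift q')" q'] QT that lift F_in by force
    also have "\<dots> \<le> 1 + (d (lift q) (lift q') + 1) + 1"
    proof -
      have "real (walk_dist T adj q (F (lift q))) \<le> 1" "real (walk_dist T adj (F (lift q')) q') \<le> 1"
        using walk_dist_lift_le QT that by auto
      moreover have "real (walk_dist T adj (F (lift q)) (F (lift q'))) \<le> d (lift q) (lift q') + 1"
        using walk_dist_F_le lift QT that by blast
      ultimately show ?thesis by linarith
    qed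
    finally show ?thesis using assms(5) by linarith
  qed
  then show "separated d R (lift ` Q)" unfolding separated_def by blast
  show "inj_on lift Q"
  proof (rule inj_onI, rule ccontr)
    fix q q' assume "q \<in> Q" "q' \<in> Q" "lift q = lift q'" "q \<noteq> q'"
    then show False using far[of q q'] lift[OF QT] \<open>0 \<le> R\<close> by fastforce
  qed
  show "lift ` Q \<subseteq> X" using lift QT by blast
  fix z assume "z \<in> lift ` Q"
  then obtain q where "q \<in> Q" "z = lift q" by blast
  have "walk_dist T adj v q \<le> l"
    using assms(2) \<open>q \<in> Q\<close> unfolding gball_def gdist_eq_walk_dist by auto
  then have "real (walk_dist T adj (F (lift v)) (F (lift q))) \<le> real l + 2"
    using tri[of "F (lift v)" v "F (lift q)"] tri[of v q "F (lift q)"] walk_dist_lift_le assms(1) QT[OF \<open>q \<in> Q\<close>]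
      lift F_in by force
  then have "K * (real (walk_dist T adj (F (lift v)) (F (lift q))) + 1) \<le> K * (real l + 3)"
    using K(1) by (intro mult_left_mono) auto
  moreover have "d (lift v) (lift q) \<le> K * (real (walk_dist T adj (F (lift v)) (F (lift q))) + 1)"
    using lift assms(1) QT[OF \<open>q \<in> Q\<close>] by (intro dist_le_walk_dist_F) auto
  ultimately show "d (lift v) z \<le> K * (real l + 3)" using \<open>z = lift q\<close> by simp
qed

lemma ln_card_ge_half_growth_rate:
  assumes "finite Q" "growth T adj l / 2 < real (card Q) * growth T adj s" "l > 0"
    and "ln (growth T adj l) / real l > c" "c * real l / 2 \<ge> ln 2 + ln (growth T adj s)"
  shows "card Q > 0" "ln (real (card Q)) \<ge> c * real l / 2"
proof -
  have G: "growth T adj l \<ge> 1" "growth T adj s \<ge> 1" by (rule one_le_growth)+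
  then have "real (card Q) * growth T adj s > 0" using assms(2) by linarith
  then show "card Q > 0" using G by (simp add: zero_less_mult_iff)
  then have "ln (growth T adj l / 2) < ln (real (card Q) * growth T adj s)"
    using assms(2) G by (subst ln_less_cancel_iff) auto
  then have "ln (growth T adj l) - ln 2 < ln (real (card Q)) + ln (growth T adj s)"
    using G \<open>card Q > 0\<close> by (simp add: ln_div ln_mult)
  moreover have "ln (growth T adj l) > c * real l" using assms(3,4) by (simp add: field_simps)
  ultimately show "ln (real (card Q)) \<ge> c * real l / 2" using assms(5) by linarith
qed

text \<open>The lifts of a maximal separated subset of a ball of radius l lie within K (l + 3) of a
  common point, so excursions to them take about K l C / (\<delta> - A) steps.\<close>
lemma scale_entropy_ge_growth_rate:
  assumes "x0 \<in> X" "\<delta> > A" "R \<ge> 0" "c > 0" "l > 0"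
    and l_large: "real l \<ge> 3 + 2 * ((\<delta> - A) / C) / K"
    and rate: "ln (growth T adj l) / real l > c"
    and small_balls: "c * real l / 2 \<ge> ln 2 + ln (growth T adj (nat \<lceil>R\<rceil> + 3))"
  shows "ereal (c * ((\<delta> - A) / C) / (8 * K)) \<le> scale_entropy X d \<delta> R x0"
proof -
  define h where "h = (\<delta> - A) / C"
  define s where "s = nat \<lceil>R\<rceil> + 3"
  define \<rho> where "\<rho> = K * (real l + 3)"
  define L where "L = nat \<lceil>\<rho> / h\<rceil> + 1"
  have "C > 0" using quasigeodesic_with_consts[OF quasigeodesic] by simp
  then have h: "h > 0" unfolding h_def using assms(2) by simp
  have "K > 0" using K(1) by simp
  obtain v Q where Q: "v \<in> T" "Q \<subseteq> gball T adj v (real l)" "finite Q"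
    "separated (gdist T adj) (real s) Q" "growth T adj l / 2 < real (card Q) * growth T adj s"
    by (rule separated_subset_of_large_gballE)
  have "R + 3 \<le> real s" unfolding s_def by linarith
  note Z = lift_separated_subset_of_gball[OF Q(1,2,4) \<open>R \<ge> 0\<close> this]
  have N: "card Q > 0" "ln (real (card Q)) \<ge> c * real l / 2"
    using ln_card_ge_half_growth_rate[OF Q(3,5) \<open>l > 0\<close> rate] small_balls unfolding s_def by auto
  have "ereal (ln (real (card (lift ` Q))) / real (2 * L)) \<le> scale_entropy X d \<delta> R x0"
    using ln_card_le_scale_entropy[OF quasigeodesic \<open>x0 \<in> X\<close> _ \<open>\<delta> > A\<close>, of "lift v" "lift ` Q" R \<rho>]
      Z Q(1,3) N(1) lift unfolding L_def h_def \<rho>_def by (auto simp: card_image card_gt_0_iff)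
  moreover have "c * h / (8 * K) * (2 * real L) \<le> c * real l / 2"
  proof -
    have "real L * h \<le> (\<rho> / h + 2) * h"
      unfolding L_def using h \<open>K > 0\<close> by (intro mult_right_mono) (auto simp: \<rho>_def, linarith)
    also have "\<dots> = \<rho> + 2 * h" using h by (simp add: field_simps)
    finally have "2 * real L * h \<le> 2 * \<rho> + 4 * h" by simp
    moreover have "(2 * \<rho> + 4 * h) / (8 * K) \<le> real l / 2"
      using l_large \<open>K > 0\<close> \<open>C > 0\<close> unfolding \<rho>_def h_def by (simp add: field_simps)
    ultimately have "2 * real L * h / (8 * K) \<le> real l / 2"
      using \<open>K > 0\<close> by (meson divide_right_mono order.trans zero_le_numeral mult_nonneg_nonneg less_imp_le)
    then have "c * (2 * real L * h / (8 * K)) \<le> c * (real l / 2)"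
      using \<open>c > 0\<close> by (intro mult_left_mono) auto
    then show ?thesis by (simp add: algebra_simps)
  qed
  then have "c * h / (8 * K) * (2 * real L) \<le> ln (real (card Q))" using N(2) by linarith
  then have "c * h / (8 * K) \<le> ln (real (card Q)) / real (2 * L)"
    unfolding L_def by (simp add: pos_le_divide_eq)
  then have "ereal (c * h / (8 * K)) \<le> ereal (ln (real (card (lift ` Q))) / real (2 * L))"
    using card_image[OF Z(1)] by simp
  ultimately show ?thesis unfolding h_def by (rule order.trans[rotated])
qed

text \<open>If growth is exponential at rate c along a sequence of scales, the lower bound of
  scale_entropy_ge_growth_rate applies for every \<delta> and R; it grows linearly in \<delta>.\<close>
theorem coarse_entropy_infinite_if_exponential:
  assumes growth: "limsup (\<lambda>l. ereal (ln (growth T adj l) / real l)) > 0" and "x0 \<in> X"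
  shows "coarse_entropy X d x0 = \<infinity>"
proof -
  obtain c where "0 < ereal c" "ereal c < limsup (\<lambda>l. ereal (ln (growth T adj l) / real l))"
    using ereal_dense2[OF growth] by blast
  then have "c > 0" by simp
  have frequently: "\<exists>l\<ge>l0. ln (growth T adj l) / real l > c" for l0
  proof (rule ccontr)
    assume "\<not> (\<exists>l\<ge>l0. ln (growth T adj l) / real l > c)"
    then have "limsup (\<lambda>l. ereal (ln (growth T adj l) / real l)) \<le> ereal c"
      by (intro Limsup_bounded eventually_sequentiallyI[of l0]) auto
    then show False using \<open>ereal c < limsup _\<close> by simp
  qed
  have "C > 0" "A \<ge> 0" "K > 0" using quasigeodesic_with_consts[OF quasigeodesic] K(1) by auto
  show ?thesis
  proof (rule coarse_entropy_eq_infinity[OF Metric_space_axioms \<open>x0 \<in> X\<close>, of "A + 1" _ 0])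
    have "(\<lambda>\<delta>. c * ((\<delta> - A) / C) / (8 * K)) = (\<lambda>\<delta>. - (c * A / (8 * K * C)) + c / (8 * K * C) * \<delta>)"
      using \<open>C > 0\<close> \<open>K > 0\<close> by (auto simp: fun_eq_iff field_simps)
    moreover have "filterlim (\<lambda>\<delta>. - (c * A / (8 * K * C)) + c / (8 * K * C) * \<delta>) at_top at_top"
      using \<open>c > 0\<close> \<open>C > 0\<close> \<open>K > 0\<close>
      by (intro filterlim_tendsto_add_at_top[OF tendsto_const]
          filterlim_tendsto_pos_mult_at_top[OF tendsto_const _ filterlim_ident]) simp
    ultimately show "filterlim (\<lambda>\<delta>. c * ((\<delta> - A) / C) / (8 * K)) at_top at_top" by simp
    fix \<delta> R :: real assume "A + 1 \<le> \<delta>" "0 \<le> R"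
    define y1 where "y1 = 3 + 2 * ((\<delta> - A) / C) / K"
    define y2 where "y2 = 2 * (ln 2 + ln (growth T adj (nat \<lceil>R\<rceil> + 3))) / c"
    obtain l where l: "l \<ge> nat \<lceil>y1\<rceil> + nat \<lceil>y2\<rceil> + 1" "ln (growth T adj l) / real l > c"
      using frequently by blast
    then have "real l \<ge> y1" "real l \<ge> y2" "l > 0" by linarith+
    have "c * real l / 2 \<ge> ln 2 + ln (growth T adj (nat \<lceil>R\<rceil> + 3))"
    proof -
      have "c * y2 \<le> c * real l" using \<open>real l \<ge> y2\<close> \<open>c > 0\<close> by (intro mult_left_mono) auto
      then show ?thesis unfolding y2_def using \<open>c > 0\<close> by simp
    qed
    moreover have "\<delta> > A" using \<open>A + 1 \<le> \<delta>\<close> by simp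
    ultimately show "ereal (c * ((\<delta> - A) / C) / (8 * K)) \<le> scale_entropy X d \<delta> R x0"
      using scale_entropy_ge_growth_rate[OF \<open>x0 \<in> X\<close> _ \<open>0 \<le> R\<close> \<open>c > 0\<close> \<open>l > 0\<close>]
        \<open>real l \<ge> y1\<close> l(2) unfolding y1_def by blast
  qed (use \<open>A \<ge> 0\<close> in simp)
qed

end

theorem mainTheorem20:
  fixes X :: "'a set" and d :: "'a \<Rightarrow> 'a \<Rightarrow> real"
  assumes "Metric_space X d" and "X \<noteq> {}" and "quasigeodesic X d"
  shows "(\<not> coarsely_bounded_geometry X d \<longrightarrow> (\<forall>x0\<in>X. coarse_entropy X d x0 = \<infinity>)) \<and>
         (coarsely_bounded_geometry X d \<longrightarrow>
            (\<exists>V E. simple_graph V E \<and> graph_connected V E \<and> bounded_degree V E \<and>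
               quasi_isometric X d V (gdist V E) \<and>
               ((\<lambda>l. ln (growth V E l) / real l) \<longlonglongrightarrow> 0 \<longrightarrow> (\<forall>x0\<in>X. coarse_entropy X d x0 = 0)) \<and>
               (limsup (\<lambda>l. ereal (ln (growth V E l) / real l)) > 0 \<longrightarrow>
                  (\<forall>x0\<in>X. coarse_entropy X d x0 = \<infinity>))))"
proof (intro conjI impI ballI)
  obtain C A where q: "quasigeodesic_with C A X d"
    using assms(3) quasigeodesic_iff_with by blast
  {
    fix x0 assume "\<not> coarsely_bounded_geometry X d" "x0 \<in> X"
    then show "coarse_entropy X d x0 = \<infinity>"
      by (rule Metric_space.coarse_entropy_infinite_if_not_coarsely_bounded_geometry[OF assms(1) q])
  }
  assume "coarsely_bounded_geometry X d"
  then obtain T :: "nat set" and e F where "Metric_space T e" "bounded_geometry T e"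
    and ce: "coarse_equivalence X d T e F"
    unfolding coarsely_bounded_geometry_def by blast
  moreover obtain \<rho>m \<rho>p R0 where "F ` X \<subseteq> T" "mono \<rho>p" "filterlim \<rho>m at_top at_top"
    "\<forall>x\<in>X. \<forall>x'\<in>X. \<rho>m (d x x') \<le> e (F x) (F x') \<and> e (F x) (F x') \<le> \<rho>p (d x x')"
    "\<forall>y\<in>T. \<exists>x\<in>X. e y (F x) \<le> R0"
    using ce unfolding coarse_equivalence_def by blast
  ultimately interpret coarse_graph X d T e F \<rho>m \<rho>p R0 C A
    using assms(1,2) q by (intro coarse_graph.intro coarse_graph_axioms.intro) auto
  show "\<exists>V E. simple_graph V E \<and> graph_connected V E \<and> bounded_degree V E \<and>
      quasi_isometric X d V (gdist V E) \<and>
      ((\<lambda>l. ln (growth V E l) / real l) \<longlonglongrightarrow> 0 \<longrightarrow> (\<forall>x0\<in>X. coarse_entropy X d x0 = 0)) \<and>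
      (limsup (\<lambda>l. ereal (ln (growth V E l) / real l)) > 0 \<longrightarrow> (\<forall>x0\<in>X. coarse_entropy X d x0 = \<infinity>))"
    by (intro exI[of _ T] exI[of _ adj] conjI impI ballI simple_graph_adj graph_connected_adj
        bounded_degree_adj quasi_isometric_adj coarse_entropy_eq_zero_if_subexponential
        coarse_entropy_infinite_if_exponential)
qed

end
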